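(* Let the setting, notation and assumptions (UA1)–(UA5) be as in the context. Assume that the map $\check\theta\mapsto\hat S(\hat{\boldsymbol\beta}_{\check\theta})$ is continuous with a single root $\tilde\theta$ or non-decreasing, that for every $\boldsymbol\beta\in\boldsymbol\Omega$ and $\epsilon>0$, $\mathbf v^TE_{\mathbf t}(\boldsymbol\beta_{\theta-\epsilon})\cdot\mathbf v^TE_{\mathbf t}(\boldsymbol\beta_{\theta+\epsilon})<0$, and that $n^{1/2}(r_1(n)r_5(n)+r_2(n)r_3(n))=o(1)$. Then $$\lim_{n\to\infty}\sup_{\boldsymbol\beta\in\boldsymbol\Omega}\sup_{t\in\mathbb R}\big|\mathbb P_{\boldsymbol\beta}(\hat U_n\le t)-\Phi(t)\big|=0,\qquad \hat U_n=\frac{n^{1/2}}{\hat\sigma}(\tilde\theta-\theta).$$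
   Context: Data $\mathbf Z\in\mathbb R^{n\times q}$ with law $\mathbb P_{\boldsymbol\beta}$ (expectation $\mathbb E_{\boldsymbol\beta}$) indexed by the true parameter $\boldsymbol\beta\in\boldsymbol\Omega=\{\boldsymbol\beta\in\mathbb R^d:\|\boldsymbol\beta\|_0\le s^*\}$; asymptotics as $n\to\infty$. $\mathbf t(\mathbf Z,\mathbf b)\in\mathbb R^d$ is an estimating equation, twice differentiable in $\mathbf b$, $\mathbf T(\mathbf Z,\mathbf b)=\partial\mathbf t/\partial\mathbf b$; under true $\boldsymbol\beta$, $E_{\mathbf t}(\mathbf b)=\lim_n\mathbb E_{\boldsymbol\beta}\mathbf t(\mathbf Z,\mathbf b)$, $E_{\mathbf T}(\mathbf b)=\lim_n\mathbb E_{\boldsymbol\beta}\mathbf T(\mathbf Z,\mathbf b)$, with $\boldsymbol\beta$ the unique root of $E_{\mathbf t}$ and $E_{\mathbf T}(\boldsymbol\beta)$ invertible. $\boldsymbol\beta=(\theta,\boldsymbol\gamma^T)^T$ ($\theta$ first coordinate); $\mathbf b_{\check\theta}$ replaces the first coordinate of $\mathbf b$ by $\check\theta$. $\mathbf v=\mathbf v(\boldsymbol\beta)$, $\mathbf v^T$ = first row of $[E_{\mathbf T}(\boldsymbol\beta)]^{-1}$; $S(\boldsymbol\beta)=\mathbf v^T\mathbf t(\mathbf Z,\boldsymbol\beta)$. $\hat{\boldsymbol\beta}=\arg\min\|\mathbf b\|_1$ s.t. $\|\mathbf t(\mathbf Z,\mathbf b)\|_\infty\le\lambda$; $\hat{\mathbf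 v}=\arg\min\|\mathbf u\|_1$ s.t. $\|\mathbf u^T\mathbf T(\mathbf Z,\hat{\boldsymbol\beta})-\mathbf e_1\|_\infty\le\lambda'$, $\mathbf e_1=(1,0,\dots,0)$; $\hat S(\mathbf b)=\hat{\mathbf v}^T\mathbf t(\mathbf Z,\mathbf b)$; $\tilde\theta$ a root of $\check\theta\mapsto\hat S(\hat{\boldsymbol\beta}_{\check\theta})$. $[\mathbf A]_{-1}$ removes, $[\mathbf A]_{*1}$ keeps, the first column. $\Phi$ is the standard normal cdf. (UA1) $\lim_n\inf_{\boldsymbol\beta\in\boldsymbol\Omega}\mathbb P_{\boldsymbol\beta}(\|\hat{\boldsymbol\beta}-\boldsymbol\beta\|_1\le r_1(n))=1$, $\lim_n\inf_{\boldsymbol\beta\in\boldsymbol\Omega}\mathbb P_{\boldsymbol\beta}(\|\hat{\mathbf v}-\mathbf v\|_1\le r_2(n))=1$, $r_1,r_2=o(1)$. (UA2) For some $\eta>0$, $\mathcal N_\theta=(\theta-\eta,\theta+\eta)$, $r_3,r_4,r_5=o(1)$: $\lim_n\inf_{\boldsymbol\beta}\inf_{\check\theta\in\mathcal N_\theta}\mathbb P_{\boldsymbol\beta}(\|\mathbf t(\mathbf Z,\boldsymbol\beta_{\check\theta})-E_{\mathbf t}(\boldsymbol\beta_{\check\theta})\|_\infty\le r_3(n))=1$; same with $|\mathbf v^T\mathbf t(\mathbf Z,\boldsymbol\beta_{\check\theta})-\mathbf v^TE_{\mathbf t}(\boldsymbol\beta_{\check\theta})|\le r_4(n)$; same with $\sup_{\nu\in[0,1]}\|\hat{\mathbf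 v}^T\mathbf T(\mathbf Z,\tilde{\boldsymbol\beta}_\nu)-\mathbf v^TE_{\mathbf T}(\boldsymbol\beta_{\check\theta})\|_\infty\le r_5(n)$, $\tilde{\boldsymbol\beta}_\nu=\nu\hat{\boldsymbol\beta}_{\check\theta}+(1-\nu)\boldsymbol\beta_{\check\theta}$; and $\sup_{\boldsymbol\beta}\sup_{\check\theta\in\mathcal N_\theta}\|E_{\mathbf t}(\boldsymbol\beta_{\check\theta})\|_\infty<\infty$, $\sup_{\boldsymbol\beta}\sup_{\check\theta\in\mathcal N_\theta}\|\mathbf v^T[E_{\mathbf T}(\boldsymbol\beta_{\check\theta})]_{-1}\|_\infty<\infty$ (all $\inf/\sup$ over $\boldsymbol\beta\in\boldsymbol\Omega$). (UA3) With $\boldsymbol\Sigma=\lim_n n\,\mathrm{Cov}_{\boldsymbol\beta}\mathbf t(\mathbf Z,\boldsymbol\beta)$ and $\sigma^2=\mathbf v^T\boldsymbol\Sigma\mathbf v$: $\inf_{\boldsymbol\beta\in\boldsymbol\Omega}\sigma^2\ge C>0$ and $\lim_n\sup_{\boldsymbol\beta\in\boldsymbol\Omega}\sup_t|\mathbb P_{\boldsymbol\beta}(\sigma^{-1}n^{1/2}S(\boldsymbol\beta)\le t)-\Phi(t)|=0$. (UA4) There is $\gamma>0$ with $\sup_{\boldsymbol\beta\in\boldsymbol\Omega}\sup_{\max(\|\check{\mathbf v}-\mathbf v\|_1,\|\check{\boldsymbol\beta}-\boldsymbol\beta\|_1)<\gamma}|\check{\mathbf v}^T\frac{\partial}{\partial\theta}[\mathbf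 T(\mathbf Z,\check{\boldsymbol\beta})]_{*1}|\le\psi(\mathbf Z)$ for a function $\psi$ with $\sup_{\boldsymbol\beta\in\boldsymbol\Omega}\mathbb E_{\boldsymbol\beta}\psi(\mathbf Z)<\infty$. (UA5) There is an estimator $\hat\sigma^2$ with $\lim_n\inf_{\boldsymbol\beta\in\boldsymbol\Omega}\mathbb P_{\boldsymbol\beta}(|\hat\sigma^2-\sigma^2|\le r_6(n))=1$, $r_6=o(1)$. *)

theory Defs
  imports "HOL-Probability.Probability"
begin

text \<open>Vectors in R^d are rendered as real ^ 'd for a finite index type 'd;
  the distinguished coordinate of interest (the paper's first coordinate,
  theta) is an index k of type 'd.\<close>

definition l1norm :: "real ^ 'd \<Rightarrow> real" where
  "l1norm x = (\<Sum>i\<in>UNIV. \<bar>x $ i\<bar>)"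

definition linfnorm :: "real ^ 'd \<Rightarrow> real" where
  "linfnorm x = Max (range (\<lambda>i. \<bar>x $ i\<bar>))"

definition l0norm :: "real ^ 'd \<Rightarrow> nat" where
  "l0norm x = card {i. x $ i \<noteq> 0}"

definition setc :: "'d \<Rightarrow> real ^ 'd \<Rightarrow> real \<Rightarrow> real ^ 'd" where
  "setc k b c = (\<chi> i. if i = k then c else b $ i)"

definition Phi :: "real \<Rightarrow> real" where
  "Phi x = measure (density lborel std_normal_density) {..x}"

definition covmat :: "'a measure \<Rightarrow> ('a \<Rightarrow> real ^ 'd) \<Rightarrow> real ^ 'd ^ 'd" where
  "covmat M X = (\<chi> i j. integral\<^sup>L M (\<lambda>z. (X z $ i - integral\<^sup>L M (\<lambda>w. X w $ i))
                                      * (X z $ j - integral\<^sup>L M (\<lambda>w. X w $ j))))"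

end

theory Submission
  imports Defs
begin

text \<open>
  On an event whose probability tends to one uniformly in \<open>\<beta>\<close>, the rates of (UA1), (UA2) and
  (UA5) hold at the true parameter and the envelope \<open>\<psi>\<close> of (UA4) is bounded by a constant \<open>K\<close>.
  There the sample criterion \<open>g c = vhat \<bullet> t (setc k betahat c)\<close> has slope within
  \<open>r5 + K \<epsilon>\<close> of 1 on \<open>[\<theta> - \<epsilon>, \<theta> + \<epsilon>]\<close>, and a mean value expansion along the segment
  from \<open>\<beta>\<close> to \<open>setc k betahat \<theta>\<close> gives \<open>\<bar>g \<theta> - v \<bullet> t \<beta>\<bar> \<le> r1 r5 + r2 r3\<close>.
  Hence \<open>g\<close> changes sign near \<open>\<theta>\<close>, its root satisfies \<open>thetatilde - \<theta> = - g \<theta> / D\<close> with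
  \<open>D\<close> close to 1, and the studentized estimator equals \<open>- (W + R) / c\<close>, where
  \<open>W = sqrt n (v \<bullet> t \<beta>) / \<sigma>\<close> is uniformly asymptotically normal by (UA3),
  \<open>\<bar>R\<bar> \<le> sqrt n (r1 r5 + r2 r3) / \<sigma> \<longlonglongrightarrow> 0\<close> and \<open>c \<longlonglongrightarrow> 1\<close>.  A Slutsky-type bound, using
  that \<open>Phi\<close> is Lipschitz and uniformly continuous under relative perturbations, turns this into
  uniform convergence of the distribution function.
\<close>

section \<open>The standard normal distribution function\<close>

abbreviation std_normal :: "real measure" where
  "std_normal \<equiv> density lborel std_normal_density"

lemma real_distribution_std_normal: "real_distribution std_normal"
  by (simp add: real_distribution_def real_distribution_axioms_def prob_space_normal_density)

lemma Phi_eq_cdf: "Phi = cdf std_normal"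
  by (simp add: Phi_def cdf_def fun_eq_iff)

lemma Phi_mono: "x \<le> y \<Longrightarrow> Phi x \<le> Phi y"
  unfolding Phi_eq_cdf
  by (rule finite_borel_measure.cdf_nondecreasing
        [OF real_distribution.finite_borel_measure_M[OF real_distribution_std_normal]])

lemma Phi_nonneg: "0 \<le> Phi x"
  unfolding Phi_eq_cdf
  by (rule finite_borel_measure.cdf_nonneg
        [OF real_distribution.finite_borel_measure_M[OF real_distribution_std_normal]])

lemma Phi_le_1: "Phi x \<le> 1"
  unfolding Phi_eq_cdf by (rule real_distribution.cdf_bounded_prob[OF real_distribution_std_normal])

lemma Phi_at_top: "(Phi \<longlongrightarrow> 1) at_top"
  unfolding Phi_eq_cdf by (rule real_distribution.cdf_lim_at_top_prob[OF real_distribution_std_normal])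

lemma Phi_at_bot: "(Phi \<longlongrightarrow> 0) at_bot"
  unfolding Phi_eq_cdf
  by (rule finite_borel_measure.cdf_lim_at_bot
        [OF real_distribution.finite_borel_measure_M[OF real_distribution_std_normal]])

lemma std_normal_density_le_1: "std_normal_density x \<le> 1"
proof -
  have "1 / sqrt (2 * pi) \<le> 1" using pi_gt3 by (simp add: divide_le_eq_1)
  moreover have "exp (- x\<^sup>2 / 2) \<le> 1" by simp
  ultimately have "1 / sqrt (2 * pi) * exp (- x\<^sup>2 / 2) \<le> 1 * 1"
    by (intro mult_mono) auto
  then show ?thesis by (simp add: std_normal_density_def)
qed

lemma Phi_diff_le:
  assumes "x \<le> y"
  shows "Phi y - Phi x \<le> y - x"
proof -
  interpret std_normal: prob_space std_normal by (rule prob_space_normal_density) simp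
  have "emeasure std_normal {x<..y} = (\<integral>\<^sup>+ z. ennreal (std_normal_density z) * indicator {x<..y} z \<partial>lborel)"
    by (simp add: emeasure_density)
  also have "\<dots> \<le> (\<integral>\<^sup>+ z. indicator {x<..y} z \<partial>lborel)"
    by (intro nn_integral_mono) (auto simp: indicator_def std_normal_density_le_1)
  also have "\<dots> = ennreal (y - x)" using assms by simp
  finally have "measure std_normal {x<..y} \<le> y - x"
    using assms by (simp add: std_normal.emeasure_eq_measure)
  moreover have "Phi y - Phi x = measure std_normal {x<..y}"
    unfolding Phi_eq_cdf using assms
    by (cases "x = y")
       (auto intro: finite_borel_measure.cdf_diff_eq
          [OF real_distribution.finite_borel_measure_M[OF real_distribution_std_normal]])
  ultimately show ?thesis by simp
qed

lemma Phi_abs_diff_le: "\<bar>Phi y - Phi x\<bar> \<le> \<bar>y - x\<bar>"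
  using Phi_diff_le[of x y] Phi_diff_le[of y x] Phi_mono[of x y] Phi_mono[of y x]
  by (cases "x \<le> y") auto

lemma std_normal_singleton_null: "{x} \<in> null_sets std_normal"
proof -
  have "AE y in lborel. y \<in> {x} \<longrightarrow> std_normal_density y = 0"
    using AE_lborel_singleton[of x] by eventually_elim auto
  then show ?thesis by (simp add: null_sets_density_iff)
qed

lemma Phi_minus: "Phi (- x) = 1 - Phi x"
proof -
  interpret std_normal: prob_space std_normal by (rule prob_space_normal_density) simp
  have "distributed std_normal lborel (\<lambda>z. z) std_normal_density"
    by (auto simp: distributed_def distr_id2)
  then have "distributed std_normal lborel (\<lambda>z. 0 + (-1) * z) (normal_density (0 + (-1) * 0) (\<bar>-1\<bar> * 1))"
    by (rule std_normal.normal_density_affine) auto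
  then have symmetric: "distr std_normal lborel uminus = std_normal"
    by (simp add: distributed_def)
  have "Phi (- x) = measure (distr std_normal lborel uminus) {..-x}"
    by (simp add: symmetric Phi_def)
  also have "\<dots> = measure std_normal {x..}"
    by (subst measure_distr) (auto intro!: arg_cong[where f = "measure std_normal"])
  also have "{x..} = UNIV - {..x} \<union> {x}" by auto
  also have "measure std_normal (UNIV - {..x} \<union> {x}) = measure std_normal (UNIV - {..x})"
    using std_normal_singleton_null by (intro measure_Un_null_set) auto
  also have "\<dots> = 1 - Phi x"
    using std_normal.prob_compl[of "{..x}"] by (simp add: Phi_def)
  finally show ?thesis .
qed

lemma Phi_relative_perturbation:
  assumes "\<delta> > 0"
  shows "\<exists>\<eta>>0. \<eta> \<le> 1/2 \<and> (\<forall>x y. \<bar>y - x\<bar> \<le> \<eta> * \<bar>x\<bar> \<longrightarrow> \<bar>Phi y - Phi x\<bar> \<le> \<delta>)"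
proof -
  from Phi_at_top assms obtain L1 where L1: "\<And>z. z \<ge> L1 \<Longrightarrow> dist (Phi z) 1 < \<delta>"
    unfolding tendsto_iff eventually_at_top_linorder by blast
  from Phi_at_bot assms obtain L2 where L2: "\<And>z. z \<le> L2 \<Longrightarrow> dist (Phi z) 0 < \<delta>"
    unfolding tendsto_iff eventually_at_bot_linorder by blast
  define L where "L = max 1 (max (2 * L1) (- 2 * L2))"
  define \<eta> where "\<eta> = min (1/2) (\<delta> / L)"
  have L: "L \<ge> 1" "L/2 \<ge> L1" "-L/2 \<le> L2" unfolding L_def by auto
  have \<eta>: "\<eta> > 0" "\<eta> \<le> 1/2" "\<eta> * L \<le> \<delta>"
    using assms L unfolding \<eta>_def by (auto simp: field_simps min_def)
  \<comment> \<open>on a bounded range the Lipschitz bound suffices, in the tails both values are near 0 or 1\<close>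
  have "\<bar>Phi y - Phi x\<bar> \<le> \<delta>" if xy: "\<bar>y - x\<bar> \<le> \<eta> * \<bar>x\<bar>" for x y
  proof (cases "\<bar>x\<bar> \<le> L")
    case True
    then have "\<eta> * \<bar>x\<bar> \<le> \<eta> * L" using \<eta> by (intro mult_left_mono) auto
    then show ?thesis using Phi_abs_diff_le[of y x] xy \<eta> by linarith
  next
    case False
    have half: "\<eta> * \<bar>x\<bar> \<le> \<bar>x\<bar> / 2" using \<eta> mult_right_mono[of \<eta> "1/2" "\<bar>x\<bar>"] by simp
    show ?thesis
    proof (cases "x > 0")
      case True
      then have "\<bar>x\<bar> = x" by simp
      then have "x \<ge> L/2" "y \<ge> L/2" using xy False half by linarith+
      then have "dist (Phi x) 1 < \<delta>" "dist (Phi y) 1 < \<delta>" using L1 L by auto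
      then show ?thesis using Phi_le_1[of x] Phi_le_1[of y] by (auto simp: dist_real_def)
    next
      case nonpos: False
      then have "\<bar>x\<bar> = -x" by simp
      then have "x \<le> -L/2" "y \<le> -L/2" using xy False half by linarith+
      then have "dist (Phi x) 0 < \<delta>" "dist (Phi y) 0 < \<delta>" using L2 L by auto
      then show ?thesis using Phi_nonneg[of x] Phi_nonneg[of y] by (auto simp: dist_real_def)
    qed
  qed
  with \<eta> show ?thesis by blast
qed

section \<open>Norms and coordinate replacement\<close>

lemma abs_nth_le_linfnorm: "\<bar>x $ i\<bar> \<le> linfnorm x"
  unfolding linfnorm_def by (rule Max_ge) auto

lemma linfnorm_nonneg: "0 \<le> linfnorm x"
  using abs_nth_le_linfnorm[of x] abs_ge_zero order_trans by blast

lemma l1norm_nonneg: "0 \<le> l1norm x"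
  unfolding l1norm_def by (rule sum_nonneg) auto

lemma l1norm_zero [simp]: "l1norm 0 = 0"
  by (simp add: l1norm_def)

lemma l1norm_triangle: "l1norm (x + y) \<le> l1norm x + l1norm y"
  unfolding l1norm_def by (simp add: sum.distrib[symmetric] sum_mono abs_triangle_ineq)

lemma l1norm_scaleR_axis: "l1norm (a *\<^sub>R axis k 1) = \<bar>a\<bar>"
proof -
  have "(\<Sum>i\<in>UNIV. \<bar>(a *\<^sub>R axis k (1::real)) $ i\<bar>) = (\<Sum>i\<in>UNIV. if i = k then \<bar>a\<bar> else 0)"
    by (intro sum.cong) (auto simp: axis_def)
  then show ?thesis by (simp add: l1norm_def)
qed

lemma abs_inner_le_l1norm_linfnorm: "\<bar>x \<bullet> y\<bar> \<le> l1norm x * linfnorm y"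
proof -
  have "\<bar>x \<bullet> y\<bar> \<le> (\<Sum>i\<in>UNIV. \<bar>x $ i * y $ i\<bar>)"
    unfolding inner_vec_def by (simp add: sum_abs)
  also have "\<dots> \<le> (\<Sum>i\<in>UNIV. \<bar>x $ i\<bar> * linfnorm y)"
    by (intro sum_mono) (auto simp: abs_mult intro: mult_left_mono abs_nth_le_linfnorm)
  finally show ?thesis by (simp add: l1norm_def sum_distrib_right)
qed

lemma setc_nth [simp]: "setc k b c $ i = (if i = k then c else b $ i)"
  by (simp add: setc_def)

lemma setc_nth_same [simp]: "setc k b (b $ k) = b"
  by (simp add: vec_eq_iff)

lemma setc_setc [simp]: "setc k (setc k b c') c = setc k b c"
  by (simp add: vec_eq_iff)

lemma setc_eq_add_axis: "setc k b c = setc k b a + (c - a) *\<^sub>R axis k 1"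
  by (simp add: vec_eq_iff axis_def)

lemma l1norm_setc_nth_le: "l1norm (setc k b (\<beta> $ k) - \<beta>) \<le> l1norm (b - \<beta>)"
  unfolding l1norm_def by (intro sum_mono) auto

lemma l1norm_setc_le: "l1norm (setc k b c - \<beta>) \<le> l1norm (b - \<beta>) + \<bar>c - \<beta> $ k\<bar>"
proof -
  have "setc k b c - \<beta> = (setc k b (\<beta> $ k) - \<beta>) + (c - \<beta> $ k) *\<^sub>R axis k 1"
    by (subst setc_eq_add_axis[of k b c "\<beta> $ k"]) simp
  then have "l1norm (setc k b c - \<beta>) \<le> l1norm (setc k b (\<beta> $ k) - \<beta>) + \<bar>c - \<beta> $ k\<bar>"
    using l1norm_triangle l1norm_scaleR_axis by metis
  then show ?thesis using l1norm_setc_nth_le[of k b \<beta>] by linarith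
qed

lemma inner_matrix_axis: "u \<bullet> (A *v axis k 1) = (u v* A) $ k"
  by (simp add: dot_lmul_matrix[symmetric] inner_axis)

lemma row_matrix_inv_vector_matrix_mult:
  assumes "invertible A"
  shows "row k (matrix_inv A) v* A = axis k 1"
proof -
  have "matrix_inv A ** A = mat 1"
    using assms unfolding invertible_def matrix_inv_def by (rule someI2_ex) auto
  moreover have "row k (matrix_inv A) v* A = row k (matrix_inv A ** A)"
    by (simp add: row_def vector_matrix_mult_def matrix_matrix_mult_def vec_eq_iff)
  ultimately show ?thesis by (simp add: row_def mat_def axis_def vec_eq_iff)
qed

section \<open>Linearization of the debiased estimating equation\<close>

lemma MVT_abs:
  fixes f f' :: "real \<Rightarrow> real"
  assumes "\<And>x. \<bar>x - a\<bar> \<le> \<bar>b - a\<bar> \<Longrightarrow> DERIV f x :> f' x"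
  shows "\<exists>\<xi>. \<bar>\<xi> - a\<bar> \<le> \<bar>b - a\<bar> \<and> f b - f a = (b - a) * f' \<xi>"
proof (cases a b rule: linorder_cases)
  case less
  with MVT2[OF less, of f f'] assms obtain z where "a < z" "z < b" "f b - f a = (b - a) * f' z"
    by auto
  then show ?thesis by (intro exI[of _ z]) auto
next
  case greater
  with MVT2[OF greater, of f f'] assms obtain z where "b < z" "z < a" "f a - f b = (a - b) * f' z"
    by auto
  then show ?thesis by (intro exI[of _ z]) (auto simp: algebra_simps)
qed simp

lemma setc_has_derivative: "(setc k b has_derivative (\<lambda>h. h *\<^sub>R axis k 1)) (at c)"
proof -
  have "((\<lambda>c. setc k b 0 + c *\<^sub>R axis k 1) has_derivative (\<lambda>h. h *\<^sub>R axis k 1)) (at c)"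
    by (auto intro!: derivative_eq_intros)
  moreover have "(\<lambda>c. setc k b 0 + c *\<^sub>R axis k 1) = setc k b"
    by (simp add: fun_eq_iff vec_eq_iff axis_def)
  ultimately show ?thesis by simp
qed

lemma has_real_derivative_inner_setc:
  fixes f :: "real ^ 'd \<Rightarrow> real ^ 'd" and f' :: "real ^ 'd \<Rightarrow> real ^ 'd ^ 'd"
  assumes "\<And>b. (f has_derivative (\<lambda>h. f' b *v h)) (at b)"
  shows "((\<lambda>c. u \<bullet> f (setc k b c)) has_real_derivative (u v* f' (setc k b c)) $ k) (at c)"
proof -
  have "((\<lambda>c. u \<bullet> f (setc k b c)) has_derivative
         (\<lambda>h. u \<bullet> (f' (setc k b c) *v (h *\<^sub>R axis k 1)))) (at c)"
    using diff_chain_at[OF setc_has_derivative assms] by (auto intro: has_derivative_inner_right simp: o_def)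
  moreover have "u \<bullet> (f' (setc k b c) *v (h *\<^sub>R axis k 1)) = (u v* f' (setc k b c)) $ k * h" for h
    by (simp add: matrix_vector_mult_scaleR inner_matrix_axis)
  ultimately show ?thesis by (simp add: has_field_derivative_def)
qed

lemma differentiable_vector_matrix_setc:
  fixes f' :: "real ^ 'd \<Rightarrow> real ^ 'd ^ 'd"
  assumes "\<And>b. f' differentiable (at b)"
  shows "(\<lambda>c. (u v* f' (setc k b c)) $ k) differentiable (at c)"
proof -
  have "linear (\<lambda>M::real^'d^'d. (u v* M) $ k)"
    by (rule linearI) (auto simp: vector_matrix_mult_def sum.distrib algebra_simps sum_distrib_left)
  then have "(\<lambda>M. (u v* M) $ k) differentiable (at (f' (setc k b c)))"
    by (simp add: bounded_linear_imp_differentiable linear_conv_bounded_linear)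
  moreover have "(f' \<circ> setc k b) differentiable (at c)"
    using setc_has_derivative assms by (intro differentiable_chain_at) (auto simp: differentiable_def)
  ultimately show ?thesis using differentiable_chain_at by (force simp: o_def)
qed

lemma has_real_derivative_inner_segment:
  fixes f :: "real ^ 'd \<Rightarrow> real ^ 'd" and f' :: "real ^ 'd \<Rightarrow> real ^ 'd ^ 'd"
  assumes "\<And>b. (f has_derivative (\<lambda>h. f' b *v h)) (at b)"
  shows "((\<lambda>\<nu>. u \<bullet> f (\<nu> *\<^sub>R p + (1 - \<nu>) *\<^sub>R q)) has_real_derivative
           (u v* f' (\<nu> *\<^sub>R p + (1 - \<nu>) *\<^sub>R q)) \<bullet> (p - q)) (at \<nu>)"
proof -
  have "(\<lambda>\<nu>. \<nu> *\<^sub>R p + (1 - \<nu>) *\<^sub>R q) = (\<lambda>\<nu>. q + \<nu> *\<^sub>R (p - q))"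
    by (auto simp: fun_eq_iff algebra_simps)
  then have "((\<lambda>\<nu>. \<nu> *\<^sub>R p + (1 - \<nu>) *\<^sub>R q) has_derivative (\<lambda>h. h *\<^sub>R (p - q))) (at \<nu>)"
    by (auto intro!: derivative_eq_intros)
  from diff_chain_at[OF this assms]
  have "((\<lambda>\<nu>. u \<bullet> f (\<nu> *\<^sub>R p + (1 - \<nu>) *\<^sub>R q)) has_derivative
         (\<lambda>h. u \<bullet> (f' (\<nu> *\<^sub>R p + (1 - \<nu>) *\<^sub>R q) *v (h *\<^sub>R (p - q))))) (at \<nu>)"
    by (auto intro: has_derivative_inner_right simp: o_def)
  moreover have "u \<bullet> (f' (\<nu> *\<^sub>R p + (1 - \<nu>) *\<^sub>R q) *v (h *\<^sub>R (p - q))) =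
      ((u v* f' (\<nu> *\<^sub>R p + (1 - \<nu>) *\<^sub>R q)) \<bullet> (p - q)) * h" for h
    by (simp only: matrix_vector_mult_scaleR inner_scaleR_right dot_lmul_matrix mult.commute)
  ultimately show ?thesis by (simp add: has_field_derivative_def)
qed

lemma secant_slope_near_one:
  fixes g h :: "real \<Rightarrow> real"
  assumes "\<And>c. DERIV g c :> h c" and "\<And>c. \<bar>c - \<theta>\<bar> \<le> \<epsilon> \<Longrightarrow> \<bar>h c - 1\<bar> \<le> \<tau>"
    and "\<bar>c - \<theta>\<bar> \<le> \<epsilon>"
  shows "\<exists>D. \<bar>D - 1\<bar> \<le> \<tau> \<and> g c - g \<theta> = (c - \<theta>) * D"
proof -
  obtain \<xi> where "\<bar>\<xi> - \<theta>\<bar> \<le> \<bar>c - \<theta>\<bar>" "g c - g \<theta> = (c - \<theta>) * h \<xi>"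
    using MVT_abs[of \<theta> c g h] assms(1) by blast
  with assms(2)[of \<xi>] assms(3) show ?thesis by auto
qed

lemma root_between_sign_change:
  fixes g :: "real \<Rightarrow> real"
  assumes below: "g a < 0" and above: "0 < g b" and "a \<le> b"
    and root: "(continuous_on UNIV g \<and> {c. g c = 0} = {\<theta>'}) \<or> (mono g \<and> g \<theta>' = 0)"
  shows "a \<le> \<theta>' \<and> \<theta>' \<le> b"
  using root
proof
  assume unique: "continuous_on UNIV g \<and> {c. g c = 0} = {\<theta>'}"
  then obtain c where "a \<le> c" "c \<le> b" "g c = 0"
    using IVT'[of g a 0 b] assms continuous_on_subset by fastforce
  moreover have "c = \<theta>'" using unique \<open>g c = 0\<close> by blast
  ultimately show ?thesis by auto
next
  assume monotone: "mono g \<and> g \<theta>' = 0"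
  have "\<theta>' < b"
  proof (rule ccontr)
    assume "\<not> \<theta>' < b"
    then have "g b \<le> g \<theta>'" using monotone by (metis monoD not_less)
    then show False using above monotone by simp
  qed
  moreover have "a < \<theta>'"
  proof (rule ccontr)
    assume "\<not> a < \<theta>'"
    then have "g \<theta>' \<le> g a" using monotone by (metis monoD not_less)
    then show False using below monotone by simp
  qed
  ultimately show ?thesis by simp
qed

lemma root_linearization:
  fixes g h :: "real \<Rightarrow> real"
  assumes deriv: "\<And>c. DERIV g c :> h c"
    and slope: "\<And>c. \<bar>c - \<theta>\<bar> \<le> \<epsilon> \<Longrightarrow> \<bar>h c - 1\<bar> \<le> \<tau>"
    and \<tau>: "\<tau> \<le> 1/2" and \<epsilon>: "\<epsilon> > 0" and small: "\<bar>g \<theta>\<bar> < \<epsilon> / 2"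
    and root: "(continuous_on UNIV g \<and> {c. g c = 0} = {\<theta>'}) \<or> (mono g \<and> g \<theta>' = 0)"
  shows "\<exists>D. \<bar>D - 1\<bar> \<le> \<tau> \<and> \<theta>' - \<theta> = - g \<theta> / D"
proof -
  have secant: "\<exists>D. \<bar>D - 1\<bar> \<le> \<tau> \<and> g c - g \<theta> = (c - \<theta>) * D" if "\<bar>c - \<theta>\<bar> \<le> \<epsilon>" for c
    using deriv slope that by (rule secant_slope_near_one)
  \<comment> \<open>a slope of at least \<open>1/2\<close> over distance \<open>\<epsilon>\<close> outweighs \<open>\<bar>g \<theta>\<bar> < \<epsilon>/2\<close>\<close>
  obtain D\<^sub>1 D\<^sub>2 where "\<bar>D\<^sub>1 - 1\<bar> \<le> \<tau>" "g (\<theta> + \<epsilon>) - g \<theta> = \<epsilon> * D\<^sub>1"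
    and "\<bar>D\<^sub>2 - 1\<bar> \<le> \<tau>" "g (\<theta> - \<epsilon>) - g \<theta> = - \<epsilon> * D\<^sub>2"
    using secant[of "\<theta> + \<epsilon>"] secant[of "\<theta> - \<epsilon>"] \<epsilon> by auto
  moreover from calculation have "\<epsilon> * D\<^sub>1 \<ge> \<epsilon> * (1/2)" "\<epsilon> * D\<^sub>2 \<ge> \<epsilon> * (1/2)"
    using \<tau> \<epsilon> by (intro mult_left_mono; simp)+
  ultimately have "g (\<theta> - \<epsilon>) < 0" "0 < g (\<theta> + \<epsilon>)" using small by auto
  with root have "\<bar>\<theta>' - \<theta>\<bar> \<le> \<epsilon>"
    using root_between_sign_change[of g "\<theta> - \<epsilon>" "\<theta> + \<epsilon>" \<theta>'] \<epsilon> by auto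
  then obtain D where "\<bar>D - 1\<bar> \<le> \<tau>" "g \<theta>' - g \<theta> = (\<theta>' - \<theta>) * D"
    using secant by blast
  moreover have "D \<noteq> 0" "g \<theta>' = 0" using calculation \<tau> root by auto
  ultimately show ?thesis by (intro exI[of _ D]) (auto simp: field_simps)
qed

lemma vector_matrix_setc_lipschitz:
  fixes f' :: "real ^ 'd \<Rightarrow> real ^ 'd ^ 'd"
  assumes diff: "\<And>b. f' differentiable (at b)"
    and bound: "\<And>b. l1norm (b - \<beta>) < \<gamma> \<Longrightarrow>
               \<bar>deriv (\<lambda>c. \<Sum>i\<in>UNIV. u $ i * f' (setc k b c) $ i $ k) (b $ k)\<bar> \<le> K"
    and near: "l1norm (b - \<beta>) + \<bar>c - \<beta> $ k\<bar> < \<gamma>"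
  shows "\<bar>(u v* f' (setc k b c)) $ k - (u v* f' (setc k b (\<beta> $ k))) $ k\<bar> \<le> K * \<bar>c - \<beta> $ k\<bar>"
proof -
  define h where "h c = (u v* f' (setc k b c)) $ k" for c
  have "DERIV h c :> deriv h c" for c
    using differentiable_vector_matrix_setc[OF diff] unfolding h_def
    by (simp add: DERIV_deriv_iff_real_differentiable)
  then obtain \<xi> where \<xi>: "\<bar>\<xi> - \<beta> $ k\<bar> \<le> \<bar>c - \<beta> $ k\<bar>" "h c - h (\<beta> $ k) = (c - \<beta> $ k) * deriv h \<xi>"
    using MVT_abs[of "\<beta> $ k" c h "deriv h"] by blast
  have "l1norm (setc k b \<xi> - \<beta>) < \<gamma>"
    using l1norm_setc_le[of k b \<xi> \<beta>] \<xi>(1) near by linarith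
  moreover have "h = (\<lambda>c. \<Sum>i\<in>UNIV. u $ i * f' (setc k (setc k b \<xi>) c) $ i $ k)"
    by (simp add: fun_eq_iff h_def vector_matrix_mult_def)
  ultimately have "\<bar>deriv h \<xi>\<bar> \<le> K" using bound by fastforce
  then have "\<bar>c - \<beta> $ k\<bar> * \<bar>deriv h \<xi>\<bar> \<le> \<bar>c - \<beta> $ k\<bar> * K" by (rule mult_left_mono) simp
  then have "\<bar>h c - h (\<beta> $ k)\<bar> \<le> K * \<bar>c - \<beta> $ k\<bar>" using \<xi>(2) by (simp add: abs_mult mult.commute)
  then show ?thesis by (simp add: h_def)
qed

lemma plugin_score_error:
  fixes f :: "real ^ 'd \<Rightarrow> real ^ 'd" and f' :: "real ^ 'd \<Rightarrow> real ^ 'd ^ 'd"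
  assumes deriv: "\<And>b. (f has_derivative (\<lambda>h. f' b *v h)) (at b)"
    and \<beta>_err: "l1norm (bh - \<beta>) \<le> r1"
    and v_err: "l1norm (vh - v) \<le> r2"
    and score_err: "linfnorm (f \<beta>) \<le> r3"
    and hessian_err: "\<forall>\<nu>\<in>{0..1}. linfnorm (vh v* f' (\<nu> *\<^sub>R setc k bh (\<beta> $ k) + (1 - \<nu>) *\<^sub>R \<beta>)
                                   - axis k 1) \<le> r5"
  shows "\<bar>vh \<bullet> f (setc k bh (\<beta> $ k)) - v \<bullet> f \<beta>\<bar> \<le> r1 * r5 + r2 * r3"
proof -
  define b where "b = setc k bh (\<beta> $ k)"
  define F where "F \<nu> = vh \<bullet> f (\<nu> *\<^sub>R b + (1 - \<nu>) *\<^sub>R \<beta>)" for \<nu>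
  obtain z where z: "0 < z" "z < 1"
    "F 1 - F 0 = (1 - 0) * ((vh v* f' (z *\<^sub>R b + (1 - z) *\<^sub>R \<beta>)) \<bullet> (b - \<beta>))"
    using MVT2[of 0 1 F "\<lambda>\<nu>. (vh v* f' (\<nu> *\<^sub>R b + (1 - \<nu>) *\<^sub>R \<beta>)) \<bullet> (b - \<beta>)"]
      has_real_derivative_inner_segment[OF deriv] unfolding F_def by auto
  define M where "M = vh v* f' (z *\<^sub>R b + (1 - z) *\<^sub>R \<beta>)"
  \<comment> \<open>\<open>b - \<beta>\<close> vanishes in coordinate \<open>k\<close>, so only the deviation of \<open>M\<close> from \<open>axis k 1\<close> counts\<close>
  have "axis k 1 \<bullet> (b - \<beta>) = 0" by (simp add: inner_axis' b_def)
  then have "F 1 - F 0 = (b - \<beta>) \<bullet> (M - axis k 1)"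
    using z(3) by (simp add: M_def inner_diff_right inner_commute)
  then have "\<bar>F 1 - F 0\<bar> = \<bar>(b - \<beta>) \<bullet> (M - axis k 1)\<bar>" by simp
  also have "\<dots> \<le> l1norm (b - \<beta>) * linfnorm (M - axis k 1)"
    by (rule abs_inner_le_l1norm_linfnorm)
  also have "\<dots> \<le> r1 * r5"
    using hessian_err z l1norm_setc_nth_le[of k bh \<beta>] \<beta>_err l1norm_nonneg linfnorm_nonneg
    unfolding M_def b_def by (intro mult_mono) (auto intro: order_trans)
  finally have segment: "\<bar>F 1 - F 0\<bar> \<le> r1 * r5" .
  have "\<bar>(vh - v) \<bullet> f \<beta>\<bar> \<le> l1norm (vh - v) * linfnorm (f \<beta>)"
    by (rule abs_inner_le_l1norm_linfnorm)
  also have "\<dots> \<le> r2 * r3"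
    using v_err score_err l1norm_nonneg linfnorm_nonneg by (intro mult_mono) (auto intro: order_trans)
  finally have "\<bar>(vh - v) \<bullet> f \<beta>\<bar> \<le> r2 * r3" .
  moreover have "vh \<bullet> f b - v \<bullet> f \<beta> = (vh - v) \<bullet> f \<beta> + (F 1 - F 0)"
    by (simp add: F_def inner_diff_left)
  ultimately show ?thesis using segment unfolding b_def by linarith
qed

lemma debiased_root_expansion:
  fixes f :: "real ^ 'd \<Rightarrow> real ^ 'd" and f' :: "real ^ 'd \<Rightarrow> real ^ 'd ^ 'd"
  assumes deriv: "\<And>b. (f has_derivative (\<lambda>h. f' b *v h)) (at b)"
    and diff: "\<And>b. f' differentiable (at b)"
    and root: "(continuous_on UNIV (\<lambda>c. vh \<bullet> f (setc k bh c)) \<and>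
                {c. vh \<bullet> f (setc k bh c) = 0} = {\<theta>'})
             \<or> (mono (\<lambda>c. vh \<bullet> f (setc k bh c)) \<and> vh \<bullet> f (setc k bh \<theta>') = 0)"
    and \<beta>_err: "l1norm (bh - \<beta>) \<le> r1"
    and v_err: "l1norm (vh - v) \<le> r2"
    and score_err: "linfnorm (f \<beta>) \<le> r3"
    and projected_score_err: "\<bar>v \<bullet> f \<beta>\<bar> \<le> r4"
    and hessian_err: "\<forall>\<nu>\<in>{0..1}. linfnorm (vh v* f' (\<nu> *\<^sub>R setc k bh (\<beta> $ k) + (1 - \<nu>) *\<^sub>R \<beta>)
                                   - axis k 1) \<le> r5"
    and bound: "\<And>b. l1norm (b - \<beta>) < \<gamma> \<Longrightarrow>
               \<bar>deriv (\<lambda>c. \<Sum>i\<in>UNIV. vh $ i * f' (setc k b c) $ i $ k) (b $ k)\<bar> \<le> K"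
    and "r1 + \<epsilon> < \<gamma>" "r5 + K * \<epsilon> \<le> \<tau>" "\<tau> \<le> 1/2" "r4 + r1 * r5 + r2 * r3 < \<epsilon> / 2" "\<epsilon> > 0"
  shows "\<exists>D. \<bar>D - 1\<bar> \<le> \<tau> \<and> \<theta>' - \<beta> $ k = - (vh \<bullet> f (setc k bh (\<beta> $ k))) / D"
proof -
  have "0 < \<gamma>" using \<beta>_err l1norm_nonneg[of "bh - \<beta>"] assms by linarith
  then have K: "0 \<le> K" using bound[of \<beta>] by (auto intro: order_trans[OF abs_ge_zero])
  have "linfnorm (vh v* f' (setc k bh (\<beta> $ k)) - axis k 1) \<le> r5"
    using hessian_err[rule_format, of 1] by simp
  then have at_\<theta>: "\<bar>(vh v* f' (setc k bh (\<beta> $ k))) $ k - 1\<bar> \<le> r5"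
    using abs_nth_le_linfnorm[of "vh v* f' (setc k bh (\<beta> $ k)) - axis k 1" k] by simp
  have slope: "\<bar>(vh v* f' (setc k bh c)) $ k - 1\<bar> \<le> \<tau>" if c: "\<bar>c - \<beta> $ k\<bar> \<le> \<epsilon>" for c
  proof -
    have "\<bar>(vh v* f' (setc k bh c)) $ k - (vh v* f' (setc k bh (\<beta> $ k))) $ k\<bar> \<le> K * \<bar>c - \<beta> $ k\<bar>"
      using assms c by (intro vector_matrix_setc_lipschitz[OF diff bound]) auto
    also have "\<dots> \<le> K * \<epsilon>" by (rule mult_left_mono[OF c K])
    finally show ?thesis using at_\<theta> assms by linarith
  qed
  have "\<bar>vh \<bullet> f (setc k bh (\<beta> $ k))\<bar> < \<epsilon> / 2"
    using plugin_score_error[OF deriv \<beta>_err v_err score_err hessian_err] projected_score_err assms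
    by linarith
  with slope show ?thesis
    by (intro root_linearization[OF has_real_derivative_inner_setc[OF deriv] _ _ _ _ root])
       (use assms in auto)
qed

section \<open>Studentization and perturbation of the normal approximation\<close>

lemma abs_sqrt_minus_1_le:
  assumes "0 \<le> q"
  shows "\<bar>sqrt q - 1\<bar> \<le> \<bar>q - 1\<bar>"
proof -
  have "q - 1 = (sqrt q - 1) * (sqrt q + 1)"
    using assms by (simp add: algebra_simps)
  then have "\<bar>q - 1\<bar> = \<bar>sqrt q - 1\<bar> * (sqrt q + 1)"
    using assms by (simp add: abs_mult)
  also have "\<dots> \<ge> \<bar>sqrt q - 1\<bar>" using assms by (simp add: mult_le_cancel_left1)
  finally show ?thesis .
qed

lemma studentized_ratio_affine:
  fixes n s2 sh D g w :: real
  assumes "0 < C" "C \<le> s2" "\<bar>sh - s2\<bar> \<le> C * \<tau>" "\<tau> \<le> 1/2" "\<bar>D - 1\<bar> \<le> \<tau>"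
  shows "\<exists>c>0. \<bar>c - 1\<bar> \<le> 3 * \<tau> \<and>
           sqrt n / sqrt sh * (- g / D) = - (sqrt n / sqrt s2 * w + sqrt n / sqrt s2 * (g - w)) / c"
proof -
  have "C * \<tau> \<le> C / 2" using assms by simp
  moreover have "s2 - sh \<le> C * \<tau>" using assms by (simp add: abs_le_iff)
  ultimately have s2: "0 < s2" and sh: "0 < sh" using assms by linarith+
  define q where "q = sh / s2"
  have "\<bar>q - 1\<bar> = \<bar>sh - s2\<bar> / s2" unfolding q_def using s2 by (simp add: field_simps abs_divide)
  also have "\<dots> \<le> (C * \<tau>) / C" using assms s2 by (intro frac_le) auto
  finally have "\<bar>sqrt q - 1\<bar> \<le> \<tau>"
    using abs_sqrt_minus_1_le[of q] s2 sh \<open>0 < C\<close> by (simp add: q_def)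
  moreover have "\<bar>D\<bar> \<le> 2" using assms by linarith
  ultimately have "\<bar>D\<bar> * \<bar>sqrt q - 1\<bar> \<le> 2 * \<tau>" by (intro mult_mono) auto
  moreover have "D * sqrt q - 1 = D * (sqrt q - 1) + (D - 1)" by (simp add: algebra_simps)
  then have "\<bar>D * sqrt q - 1\<bar> \<le> \<bar>D\<bar> * \<bar>sqrt q - 1\<bar> + \<bar>D - 1\<bar>"
    by (metis abs_mult abs_triangle_ineq)
  ultimately have "\<bar>D * sqrt q - 1\<bar> \<le> 3 * \<tau>" using assms by linarith
  moreover have "0 < D * sqrt q" using assms s2 sh by (simp add: q_def)
  moreover have "D \<noteq> 0" using assms by auto
  then have "sqrt n / sqrt sh * (- g / D) =
      - (sqrt n / sqrt s2 * w + sqrt n / sqrt s2 * (g - w)) / (D * sqrt q)"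
    using s2 sh by (simp add: q_def real_sqrt_divide field_simps)
  ultimately show ?thesis by (intro exI[of _ "D * sqrt q"]) simp
qed

lemma neg_affine_le_bounds:
  fixes c R w x \<eta> \<rho> :: real
  assumes "0 < c" "\<bar>c - 1\<bar> \<le> \<eta>" "\<bar>R\<bar> \<le> \<rho>"
  shows "- (w + R) / c \<le> x \<Longrightarrow> - (x + \<eta> * \<bar>x\<bar>) - \<rho> \<le> w"
    and "- (x - \<eta> * \<bar>x\<bar>) + \<rho> \<le> w \<Longrightarrow> - (w + R) / c \<le> x"
proof -
  have le_iff: "- (w + R) / c \<le> x \<longleftrightarrow> - (w + R) \<le> c * x"
    using assms by (simp add: pos_divide_le_eq mult.commute)
  have "\<bar>c * x - x\<bar> = \<bar>c - 1\<bar> * \<bar>x\<bar>" by (simp add: abs_mult[symmetric] algebra_simps)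
  also have "\<dots> \<le> \<eta> * \<bar>x\<bar>" using assms by (intro mult_right_mono) auto
  finally have "\<bar>c * x - x\<bar> \<le> \<eta> * \<bar>x\<bar>" .
  then show "- (w + R) / c \<le> x \<Longrightarrow> - (x + \<eta> * \<bar>x\<bar>) - \<rho> \<le> w"
    and "- (x - \<eta> * \<bar>x\<bar>) + \<rho> \<le> w \<Longrightarrow> - (w + R) / c \<le> x"
    unfolding le_iff using assms by (auto simp: abs_le_iff)
qed

lemma (in prob_space) prob_Int_ge:
  assumes "A \<in> events" "B \<in> events"
  shows "prob A + prob B - 1 \<le> prob (A \<inter> B)"
proof -
  have "prob (A - B) \<le> prob (space M - B)"
    using assms sets.sets_into_space by (intro finite_measure_mono) auto
  then show ?thesis using finite_measure_Diff'[OF assms] prob_compl[OF assms(2)] by simp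
qed
lemma (in prob_space) prob_le_add_prob_compl:
  assumes "S \<subseteq> A \<union> (space M - G)" "A \<in> events" "G \<in> events"
  shows "prob S \<le> prob A + prob (space M - G)"
proof -
  have "prob S \<le> prob (A \<union> (space M - G))"
    using assms by (intro finite_measure_mono) auto
  also have "\<dots> \<le> prob A + prob (space M - G)"
    using assms by (intro measure_Un_le) auto
  finally show ?thesis .
qed

lemma (in prob_space) one_minus_prob_le_le_prob_ge:
  fixes W :: "'a \<Rightarrow> real"
  assumes [measurable]: "W \<in> borel_measurable M"
  shows "1 - prob {z \<in> space M. W z \<le> y} \<le> prob {z \<in> space M. y \<le> W z}"
proof -
  have "prob (space M - {z \<in> space M. W z \<le> y}) \<le> prob {z \<in> space M. y \<le> W z}"
    by (intro finite_measure_mono) auto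
  then show ?thesis by (subst (asm) prob_compl) auto
qed

lemma (in prob_space) prob_ge_le_one_minus_prob_le:
  fixes W :: "'a \<Rightarrow> real"
  assumes [measurable]: "W \<in> borel_measurable M" and "0 < \<rho>"
  shows "prob {z \<in> space M. y \<le> W z} \<le> 1 - prob {z \<in> space M. W z \<le> y - \<rho>}"
proof -
  have "prob {z \<in> space M. y \<le> W z} \<le> prob (space M - {z \<in> space M. W z \<le> y - \<rho>})"
    using \<open>0 < \<rho>\<close> by (intro finite_measure_mono) auto
  then show ?thesis by (subst (asm) prob_compl) auto
qed

lemma (in prob_space) cdf_affine_perturbation:
  fixes W U :: "'a \<Rightarrow> real"
  assumes [measurable]: "W \<in> borel_measurable M" "U \<in> borel_measurable M"
    and W_cdf: "\<And>y. \<bar>prob {z \<in> space M. W z \<le> y} - Phi y\<bar> \<le> a"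
    and G: "G \<in> events" "1 - b \<le> prob G"
    and affine: "\<And>z. z \<in> G \<Longrightarrow> \<exists>c R. 0 < c \<and> \<bar>c - 1\<bar> \<le> \<eta> \<and> \<bar>R\<bar> \<le> \<rho> \<and> U z = - (W z + R) / c"
    and Phi_near: "\<And>y. \<bar>y - x\<bar> \<le> \<eta> * \<bar>x\<bar> \<Longrightarrow> \<bar>Phi y - Phi x\<bar> \<le> e"
    and \<eta>: "0 \<le> \<eta>" and \<rho>: "0 < \<rho>"
  shows "\<bar>prob {z \<in> space M. U z \<le> x} - Phi x\<bar> \<le> e + 2 * \<rho> + a + b"
proof -
  define lo where "lo = - (x + \<eta> * \<bar>x\<bar>)"
  define hi where "hi = - (x - \<eta> * \<bar>x\<bar>)"
  define S where "S = {z \<in> space M. U z \<le> x}"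
  have on_G: "(U z \<le> x \<longrightarrow> lo - \<rho> \<le> W z) \<and> (hi + \<rho> \<le> W z \<longrightarrow> U z \<le> x)" if z: "z \<in> G" for z
  proof -
    obtain c R where "0 < c" "\<bar>c - 1\<bar> \<le> \<eta>" "\<bar>R\<bar> \<le> \<rho>" "U z = - (W z + R) / c"
      using affine[OF z] by blast
    with neg_affine_le_bounds[where c = c and R = R and w = "W z" and x = x and \<eta> = \<eta> and \<rho> = \<rho>]
    show ?thesis unfolding lo_def hi_def by simp
  qed
  have "prob (space M - G) \<le> b" using G prob_compl by simp
  have "prob S \<le> prob {z \<in> space M. lo - \<rho> \<le> W z} + prob (space M - G)"
    using on_G G by (intro prob_le_add_prob_compl) (auto simp: S_def)
  also have "\<dots> \<le> 1 - prob {z \<in> space M. W z \<le> lo - \<rho> - \<rho>} + b"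
    using prob_ge_le_one_minus_prob_le[of W \<rho> "lo - \<rho>"] \<rho> \<open>_ \<le> b\<close> by simp
  also have "\<dots> \<le> Phi (- lo + 2 * \<rho>) + a + b"
    using W_cdf[of "lo - \<rho> - \<rho>"] Phi_minus[of "- lo + 2 * \<rho>"] by simp
  also have "Phi (- lo + 2 * \<rho>) \<le> Phi x + e + 2 * \<rho>"
    using Phi_diff_le[of "- lo" "- lo + 2 * \<rho>"] Phi_near[of "- lo"] \<eta> \<rho> by (simp add: lo_def abs_mult)
  finally have upper: "prob S \<le> Phi x + e + 2 * \<rho> + a + b" by simp
  have "S \<in> events" unfolding S_def by measurable
  with on_G G have "prob {z \<in> space M. hi + \<rho> \<le> W z} \<le> prob S + prob (space M - G)"
    by (intro prob_le_add_prob_compl) (auto simp: S_def)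
  then have "1 - prob {z \<in> space M. W z \<le> hi + \<rho>} - b \<le> prob S"
    using one_minus_prob_le_le_prob_ge[of W "hi + \<rho>"] \<open>_ \<le> b\<close> by simp
  moreover have "Phi (- hi - \<rho>) - a \<le> 1 - prob {z \<in> space M. W z \<le> hi + \<rho>}"
    using W_cdf[of "hi + \<rho>"] Phi_minus[of "hi + \<rho>"] by simp
  moreover have "Phi x - e - \<rho> \<le> Phi (- hi - \<rho>)"
    using Phi_diff_le[of "- hi - \<rho>" "- hi"] Phi_near[of "- hi"] \<eta> \<rho> by (simp add: hi_def abs_mult)
  ultimately have lower: "Phi x - e - \<rho> - a - b \<le> prob S" by linarith
  show ?thesis using upper lower \<rho> unfolding S_def by (simp add: abs_le_iff)
qed

section \<open>Uniformity over the parameter space\<close>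

lemma eventually_forall_ge_of_INF_tendsto:
  fixes f :: "nat \<Rightarrow> 'a \<Rightarrow> real"
  assumes lim: "(\<lambda>n. INF \<beta>\<in>\<Omega>. f n \<beta>) \<longlonglongrightarrow> l"
    and nonneg: "\<And>n \<beta>. \<beta> \<in> \<Omega> \<Longrightarrow> 0 \<le> f n \<beta>" and "e < l"
  shows "\<forall>\<^sub>F n in sequentially. \<forall>\<beta>\<in>\<Omega>. e \<le> f n \<beta>"
proof -
  have "\<forall>\<^sub>F n in sequentially. e < (INF \<beta>\<in>\<Omega>. f n \<beta>)"
    using lim \<open>e < l\<close> by (rule order_tendstoD)
  then show ?thesis
  proof eventually_elim
    case (elim n)
    have "(INF \<beta>\<in>\<Omega>. f n \<beta>) \<le> f n \<beta>" if "\<beta> \<in> \<Omega>" for \<beta>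
      using that nonneg by (intro cINF_lower bdd_belowI[of _ 0]) auto
    with elim show ?case by force
  qed
qed

lemma eventually_forall_le_of_SUP_tendsto:
  fixes F :: "nat \<Rightarrow> 'a \<Rightarrow> 'b \<Rightarrow> real"
  assumes lim: "(\<lambda>n. SUP \<beta>\<in>\<Omega>. SUP x. F n \<beta> x) \<longlonglongrightarrow> l"
    and bounded: "\<And>n \<beta> x. \<beta> \<in> \<Omega> \<Longrightarrow> 0 \<le> F n \<beta> x \<and> F n \<beta> x \<le> B" and "l < e"
  shows "\<forall>\<^sub>F n in sequentially. \<forall>\<beta>\<in>\<Omega>. \<forall>x. F n \<beta> x \<le> e"
proof -
  have "\<forall>\<^sub>F n in sequentially. (SUP \<beta>\<in>\<Omega>. SUP x. F n \<beta> x) < e"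
    using lim \<open>l < e\<close> by (rule order_tendstoD)
  then show ?thesis
  proof eventually_elim
    case (elim n)
    have "F n \<beta> x \<le> (SUP \<beta>\<in>\<Omega>. SUP x. F n \<beta> x)" if "\<beta> \<in> \<Omega>" for \<beta> x
    proof -
      have "F n \<beta> x \<le> (SUP x. F n \<beta> x)"
        using bounded that by (intro cSUP_upper bdd_aboveI[of _ B]) auto
      also have "\<dots> \<le> (SUP \<beta>\<in>\<Omega>. SUP x. F n \<beta> x)"
        using bounded that by (intro cSUP_upper bdd_aboveI[of _ B]) (auto intro: cSUP_least)
      finally show ?thesis .
    qed
    with elim show ?case by (meson less_imp_le order_trans)
  qed
qed

lemma SUP_SUP_tendsto_zeroI:
  fixes F :: "nat \<Rightarrow> 'a \<Rightarrow> 'b \<Rightarrow> real"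
  assumes "\<Omega> \<noteq> {}" and nonneg: "\<And>n \<beta> x. \<beta> \<in> \<Omega> \<Longrightarrow> 0 \<le> F n \<beta> x"
    and small: "\<And>e. 0 < e \<Longrightarrow> \<forall>\<^sub>F n in sequentially. \<forall>\<beta>\<in>\<Omega>. \<forall>x. F n \<beta> x \<le> e"
  shows "(\<lambda>n. SUP \<beta>\<in>\<Omega>. SUP x. F n \<beta> x) \<longlonglongrightarrow> 0"
proof (rule tendstoI)
  fix r :: real assume "0 < r"
  have "\<forall>\<^sub>F n in sequentially. \<forall>\<beta>\<in>\<Omega>. \<forall>x. F n \<beta> x \<le> r/2"
    using \<open>0 < r\<close> by (intro small) simp
  then show "\<forall>\<^sub>F n in sequentially. dist (SUP \<beta>\<in>\<Omega>. SUP x. F n \<beta> x) 0 < r"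
  proof eventually_elim
    case (elim n)
    have inner: "(SUP x. F n \<beta> x) \<le> r/2" if "\<beta> \<in> \<Omega>" for \<beta>
      using elim that by (intro cSUP_least) auto
    have bdd: "bdd_above ((\<lambda>\<beta>. SUP x. F n \<beta> x) ` \<Omega>)"
      using inner by (intro bdd_aboveI[of _ "r/2"]) auto
    obtain \<beta>\<^sub>0 where "\<beta>\<^sub>0 \<in> \<Omega>" using \<open>\<Omega> \<noteq> {}\<close> by blast
    have "0 \<le> (SUP x. F n \<beta>\<^sub>0 x)"
      using elim nonneg \<open>\<beta>\<^sub>0 \<in> \<Omega>\<close> by (intro cSUP_upper2 bdd_aboveI[of _ "r/2"]) auto
    also have "\<dots> \<le> (SUP \<beta>\<in>\<Omega>. SUP x. F n \<beta> x)"
      by (rule cSUP_upper[OF \<open>\<beta>\<^sub>0 \<in> \<Omega>\<close> bdd])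
    finally have "0 \<le> (SUP \<beta>\<in>\<Omega>. SUP x. F n \<beta> x)" .
    moreover have "(SUP \<beta>\<in>\<Omega>. SUP x. F n \<beta> x) \<le> r/2"
      by (rule cSUP_least) (use inner \<open>\<Omega> \<noteq> {}\<close> in auto)
    ultimately show ?case using \<open>0 < r\<close> by (simp add: dist_real_def)
  qed
qed

lemma INF_INF_tendsto_one_at_point:
  fixes f :: "nat \<Rightarrow> 'a \<Rightarrow> 'b \<Rightarrow> real"
  assumes lim: "(\<lambda>n. INF \<beta>\<in>\<Omega>. INF c\<in>I \<beta>. f n \<beta> c) \<longlonglongrightarrow> 1"
    and point: "\<And>\<beta>. \<beta> \<in> \<Omega> \<Longrightarrow> a \<beta> \<in> I \<beta>"
    and bounded: "\<And>n \<beta> c. \<beta> \<in> \<Omega> \<Longrightarrow> 0 \<le> f n \<beta> c \<and> f n \<beta> c \<le> 1" and "\<Omega> \<noteq> {}"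
  shows "(\<lambda>n. INF \<beta>\<in>\<Omega>. f n \<beta> (a \<beta>)) \<longlonglongrightarrow> 1"
proof (rule tendsto_sandwich[OF _ _ lim tendsto_const])
  have inner: "(INF c\<in>I \<beta>. f n \<beta> c) \<le> f n \<beta> (a \<beta>)" "0 \<le> (INF c\<in>I \<beta>. f n \<beta> c)"
    if "\<beta> \<in> \<Omega>" for n \<beta>
  proof -
    have "I \<beta> \<noteq> {}" using point[OF that] by blast
    with that point bounded show "(INF c\<in>I \<beta>. f n \<beta> c) \<le> f n \<beta> (a \<beta>)" "0 \<le> (INF c\<in>I \<beta>. f n \<beta> c)"
      by (auto intro!: cINF_lower cINF_greatest bdd_belowI[of _ 0])
  qed
  show "\<forall>\<^sub>F n in sequentially. (INF \<beta>\<in>\<Omega>. INF c\<in>I \<beta>. f n \<beta> c) \<le> (INF \<beta>\<in>\<Omega>. f n \<beta> (a \<beta>))"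
    using \<open>\<Omega> \<noteq> {}\<close> inner point bounded
    by (intro always_eventually allI cINF_greatest cINF_lower2 bdd_belowI[of _ 0]) auto
  obtain \<beta>\<^sub>0 where "\<beta>\<^sub>0 \<in> \<Omega>" using \<open>\<Omega> \<noteq> {}\<close> by blast
  then show "\<forall>\<^sub>F n in sequentially. (INF \<beta>\<in>\<Omega>. f n \<beta> (a \<beta>)) \<le> 1"
    using bounded by (intro always_eventually allI cINF_lower2 bdd_belowI[of _ 0]) auto
qed

section \<open>The debiased estimator\<close>

text \<open>\<open>\<psi>\<close>, \<open>\<gamma>\<close>, \<open>B\<close> and \<open>C\<close> are the witnesses of (UA4) and (UA3).\<close>

locale debiased_inference =
  fixes P :: "nat \<Rightarrow> real ^ 'd \<Rightarrow> 'z measure"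
    and \<Omega> :: "(real ^ 'd) set" and k :: 'd
    and t :: "nat \<Rightarrow> 'z \<Rightarrow> real ^ 'd \<Rightarrow> real ^ 'd"
    and T :: "nat \<Rightarrow> 'z \<Rightarrow> real ^ 'd \<Rightarrow> real ^ 'd ^ 'd"
    and Et :: "real ^ 'd \<Rightarrow> real ^ 'd \<Rightarrow> real ^ 'd"
    and ET :: "real ^ 'd \<Rightarrow> real ^ 'd \<Rightarrow> real ^ 'd ^ 'd"
    and v :: "real ^ 'd \<Rightarrow> real ^ 'd" and sigma2 :: "real ^ 'd \<Rightarrow> real"
    and betahat vhat :: "nat \<Rightarrow> 'z \<Rightarrow> real ^ 'd"
    and thetatilde sigma2hat :: "nat \<Rightarrow> 'z \<Rightarrow> real"
    and r1 r2 r3 r4 r5 r6 :: "nat \<Rightarrow> real"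
    and \<psi> :: "nat \<Rightarrow> 'z \<Rightarrow> real" and \<gamma> B C :: real
  assumes prob_space_P: "\<And>n \<beta>. \<beta> \<in> \<Omega> \<Longrightarrow> prob_space (P n \<beta>)"
    and \<Omega>_nonempty: "\<Omega> \<noteq> {}"
    and t_measurable: "\<And>n \<beta>. \<beta> \<in> \<Omega> \<Longrightarrow> (\<lambda>Z. t n Z \<beta>) \<in> borel_measurable (P n \<beta>)"
    and thetatilde_measurable: "\<And>n \<beta>. \<beta> \<in> \<Omega> \<Longrightarrow> thetatilde n \<in> borel_measurable (P n \<beta>)"
    and sigma2hat_measurable: "\<And>n \<beta>. \<beta> \<in> \<Omega> \<Longrightarrow> sigma2hat n \<in> borel_measurable (P n \<beta>)"
    and t_has_derivative: "\<And>n Z b. (t n Z has_derivative (\<lambda>h. T n Z b *v h)) (at b)"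
    and T_differentiable: "\<And>n Z b. T n Z differentiable (at b)"
    and thetatilde_root: "\<And>n Z.
          (continuous_on UNIV (\<lambda>c. vhat n Z \<bullet> t n Z (setc k (betahat n Z) c)) \<and>
           {c. vhat n Z \<bullet> t n Z (setc k (betahat n Z) c) = 0} = {thetatilde n Z})
        \<or> (mono (\<lambda>c. vhat n Z \<bullet> t n Z (setc k (betahat n Z) c)) \<and>
           vhat n Z \<bullet> t n Z (setc k (betahat n Z) (thetatilde n Z)) = 0)"
    and betahat_rate: "(\<lambda>n. INF \<beta>\<in>\<Omega>. measure (P n \<beta>)
          {Z \<in> space (P n \<beta>). l1norm (betahat n Z - \<beta>) \<le> r1 n}) \<longlonglongrightarrow> 1"
    and vhat_rate: "(\<lambda>n. INF \<beta>\<in>\<Omega>. measure (P n \<beta>)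
          {Z \<in> space (P n \<beta>). l1norm (vhat n Z - v \<beta>) \<le> r2 n}) \<longlonglongrightarrow> 1"
    and Et_root: "\<And>\<beta> b. \<beta> \<in> \<Omega> \<Longrightarrow> Et \<beta> b = 0 \<longleftrightarrow> b = \<beta>"
    and ET_invertible: "\<And>\<beta>. \<beta> \<in> \<Omega> \<Longrightarrow> invertible (ET \<beta> \<beta>)"
    and v_eq_row: "\<And>\<beta>. v \<beta> = row k (matrix_inv (ET \<beta> \<beta>))"
    and local_rates: "\<exists>\<eta>>0.
       (\<lambda>n. INF \<beta>\<in>\<Omega>. INF c\<in>{\<beta> $ k - \<eta> <..< \<beta> $ k + \<eta>}. measure (P n \<beta>)
          {Z \<in> space (P n \<beta>). linfnorm (t n Z (setc k \<beta> c) - Et \<beta> (setc k \<beta> c)) \<le> r3 n})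
          \<longlonglongrightarrow> 1
     \<and> (\<lambda>n. INF \<beta>\<in>\<Omega>. INF c\<in>{\<beta> $ k - \<eta> <..< \<beta> $ k + \<eta>}. measure (P n \<beta>)
          {Z \<in> space (P n \<beta>). \<bar>v \<beta> \<bullet> t n Z (setc k \<beta> c) - v \<beta> \<bullet> Et \<beta> (setc k \<beta> c)\<bar> \<le> r4 n})
          \<longlonglongrightarrow> 1
     \<and> (\<lambda>n. INF \<beta>\<in>\<Omega>. INF c\<in>{\<beta> $ k - \<eta> <..< \<beta> $ k + \<eta>}. measure (P n \<beta>)
          {Z \<in> space (P n \<beta>). \<forall>\<nu>\<in>{0..1::real}.
             linfnorm (vhat n Z v* T n Z (\<nu> *\<^sub>R setc k (betahat n Z) c + (1 - \<nu>) *\<^sub>R setc k \<beta> c)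
                       - v \<beta> v* ET \<beta> (setc k \<beta> c)) \<le> r5 n})
          \<longlonglongrightarrow> 1"
    and sigma2hat_rate: "(\<lambda>n. INF \<beta>\<in>\<Omega>. measure (P n \<beta>)
          {Z \<in> space (P n \<beta>). \<bar>sigma2hat n Z - sigma2 \<beta>\<bar> \<le> r6 n}) \<longlonglongrightarrow> 1"
    and r1: "r1 \<longlonglongrightarrow> 0" and r2: "r2 \<longlonglongrightarrow> 0" and r3: "r3 \<longlonglongrightarrow> 0"
    and r4: "r4 \<longlonglongrightarrow> 0" and r5: "r5 \<longlonglongrightarrow> 0" and r6: "r6 \<longlonglongrightarrow> 0"
    and root_n_rate: "(\<lambda>n. sqrt (real n) * (r1 n * r5 n + r2 n * r3 n)) \<longlonglongrightarrow> 0"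
    and sigma2_lower: "0 < C" "\<And>\<beta>. \<beta> \<in> \<Omega> \<Longrightarrow> C \<le> sigma2 \<beta>"
    and score_clt: "(\<lambda>n. SUP \<beta>\<in>\<Omega>. SUP x. \<bar>measure (P n \<beta>)
          {Z \<in> space (P n \<beta>). sqrt (real n) / sqrt (sigma2 \<beta>) * (v \<beta> \<bullet> t n Z \<beta>) \<le> x}
          - Phi x\<bar>) \<longlonglongrightarrow> 0"
    and \<gamma>_pos: "0 < \<gamma>"
    and slope_derivative_le_\<psi>: "\<And>n \<beta> Z u b. \<beta> \<in> \<Omega> \<Longrightarrow> l1norm (u - v \<beta>) < \<gamma> \<Longrightarrow>
          l1norm (b - \<beta>) < \<gamma> \<Longrightarrow>
          \<bar>deriv (\<lambda>c. \<Sum>i\<in>UNIV. u $ i * T n Z (setc k b c) $ i $ k) (b $ k)\<bar> \<le> \<psi> n Z"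
    and \<psi>_integrable: "\<And>n \<beta>. \<beta> \<in> \<Omega> \<Longrightarrow> integrable (P n \<beta>) (\<psi> n)"
    and \<psi>_integral_le: "\<And>n \<beta>. \<beta> \<in> \<Omega> \<Longrightarrow> integral\<^sup>L (P n \<beta>) (\<psi> n) \<le> B"
begin

lemma rate_at_truth:
  assumes "(\<lambda>n. INF \<beta>\<in>\<Omega>. INF c\<in>{\<beta> $ k - \<eta> <..< \<beta> $ k + \<eta>}. measure (P n \<beta>) (A n \<beta> c)) \<longlonglongrightarrow> 1"
    and "0 < \<eta>"
  shows "(\<lambda>n. INF \<beta>\<in>\<Omega>. measure (P n \<beta>) (A n \<beta> (\<beta> $ k))) \<longlonglongrightarrow> 1"
  using assms \<Omega>_nonempty prob_space.prob_le_1[OF prob_space_P]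
  by (intro INF_INF_tendsto_one_at_point[OF assms(1)]) auto

lemma Et_at_truth: "\<beta> \<in> \<Omega> \<Longrightarrow> Et \<beta> \<beta> = 0"
  using Et_root by blast

lemma v_ET_at_truth: "\<beta> \<in> \<Omega> \<Longrightarrow> v \<beta> v* ET \<beta> \<beta> = axis k 1"
  unfolding v_eq_row by (rule row_matrix_inv_vector_matrix_mult[OF ET_invertible])

lemma score_rate: "(\<lambda>n. INF \<beta>\<in>\<Omega>. measure (P n \<beta>)
    {Z \<in> space (P n \<beta>). linfnorm (t n Z \<beta>) \<le> r3 n}) \<longlonglongrightarrow> 1"
proof -
  obtain \<eta> where "0 < \<eta>" and "(\<lambda>n. INF \<beta>\<in>\<Omega>. INF c\<in>{\<beta> $ k - \<eta> <..< \<beta> $ k + \<eta>}. measure (P n \<beta>)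
      {Z \<in> space (P n \<beta>). linfnorm (t n Z (setc k \<beta> c) - Et \<beta> (setc k \<beta> c)) \<le> r3 n}) \<longlonglongrightarrow> 1"
    using local_rates by blast
  from rate_at_truth[OF this(2,1)] show ?thesis by (simp add: Et_at_truth cong: INF_cong_simp)
qed

lemma projected_score_rate: "(\<lambda>n. INF \<beta>\<in>\<Omega>. measure (P n \<beta>)
    {Z \<in> space (P n \<beta>). \<bar>v \<beta> \<bullet> t n Z \<beta>\<bar> \<le> r4 n}) \<longlonglongrightarrow> 1"
proof -
  obtain \<eta> where "0 < \<eta>" and "(\<lambda>n. INF \<beta>\<in>\<Omega>. INF c\<in>{\<beta> $ k - \<eta> <..< \<beta> $ k + \<eta>}. measure (P n \<beta>)
      {Z \<in> space (P n \<beta>). \<bar>v \<beta> \<bullet> t n Z (setc k \<beta> c) - v \<beta> \<bullet> Et \<beta> (setc k \<beta> c)\<bar> \<le> r4 n}) \<longlonglongrightarrow> 1"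
    using local_rates by blast
  from rate_at_truth[OF this(2,1)] show ?thesis by (simp add: Et_at_truth cong: INF_cong_simp)
qed

lemma hessian_rate: "(\<lambda>n. INF \<beta>\<in>\<Omega>. measure (P n \<beta>)
    {Z \<in> space (P n \<beta>). \<forall>\<nu>\<in>{0..1}. linfnorm (vhat n Z v* T n Z
       (\<nu> *\<^sub>R setc k (betahat n Z) (\<beta> $ k) + (1 - \<nu>) *\<^sub>R \<beta>) - axis k 1) \<le> r5 n}) \<longlonglongrightarrow> 1"
proof -
  obtain \<eta> where "0 < \<eta>" and "(\<lambda>n. INF \<beta>\<in>\<Omega>. INF c\<in>{\<beta> $ k - \<eta> <..< \<beta> $ k + \<eta>}. measure (P n \<beta>)
      {Z \<in> space (P n \<beta>). \<forall>\<nu>\<in>{0..1::real}.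
         linfnorm (vhat n Z v* T n Z (\<nu> *\<^sub>R setc k (betahat n Z) c + (1 - \<nu>) *\<^sub>R setc k \<beta> c)
                   - v \<beta> v* ET \<beta> (setc k \<beta> c)) \<le> r5 n}) \<longlonglongrightarrow> 1"
    using local_rates by blast
  from rate_at_truth[OF this(2,1)] show ?thesis by (simp add: v_ET_at_truth cong: INF_cong_simp)
qed

definition good_event :: "real \<Rightarrow> nat \<Rightarrow> real ^ 'd \<Rightarrow> 'z set" where
  "good_event K n \<beta> = {Z \<in> space (P n \<beta>).
     l1norm (betahat n Z - \<beta>) \<le> r1 n \<and> l1norm (vhat n Z - v \<beta>) \<le> r2 n \<and>
     linfnorm (t n Z \<beta>) \<le> r3 n \<and> \<bar>v \<beta> \<bullet> t n Z \<beta>\<bar> \<le> r4 n \<and>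
     (\<forall>\<nu>\<in>{0..1}. linfnorm (vhat n Z v* T n Z
        (\<nu> *\<^sub>R setc k (betahat n Z) (\<beta> $ k) + (1 - \<nu>) *\<^sub>R \<beta>) - axis k 1) \<le> r5 n) \<and>
     \<bar>sigma2hat n Z - sigma2 \<beta>\<bar> \<le> r6 n \<and> \<psi> n Z \<le> K}"

lemma \<psi>_nonneg: "0 \<le> \<psi> n Z"
proof -
  obtain \<beta> where "\<beta> \<in> \<Omega>" using \<Omega>_nonempty by blast
  with slope_derivative_le_\<psi>[of \<beta> "v \<beta>" \<beta>] \<gamma>_pos show ?thesis
    by (auto intro: order_trans[OF abs_ge_zero])
qed

lemma \<psi>_le_likely:
  assumes "\<beta> \<in> \<Omega>" "0 < K"
  shows "1 - B / K \<le> measure (P n \<beta>) {Z \<in> space (P n \<beta>). \<psi> n Z \<le> K}"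
proof -
  interpret prob_space "P n \<beta>" by (rule prob_space_P[OF assms(1)])
  have [measurable]: "\<psi> n \<in> borel_measurable (P n \<beta>)"
    using \<psi>_integrable[OF assms(1)] by (rule borel_measurable_integrable)
  have "prob (space (P n \<beta>) - {Z \<in> space (P n \<beta>). \<psi> n Z \<le> K})
      \<le> prob {Z \<in> space (P n \<beta>). K \<le> \<psi> n Z}"
    by (intro finite_measure_mono) auto
  also have "\<dots> \<le> integral\<^sup>L (P n \<beta>) (\<psi> n) / K"
    using \<psi>_integrable[OF assms(1)] \<psi>_nonneg assms(2)
    by (intro integral_Markov_inequality_measure[where A = "space (P n \<beta>)"]) auto
  also have "\<dots> \<le> B / K"
    using \<psi>_integral_le[OF assms(1)] assms(2) by (simp add: divide_right_mono)
  finally show ?thesis by (subst (asm) prob_compl) auto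
qed

lemma good_event_prob_ge:
  assumes \<beta>: "\<beta> \<in> \<Omega>" and "0 < K" "e < 1"
    and "1 - e \<le> measure (P n \<beta>) {Z \<in> space (P n \<beta>). l1norm (betahat n Z - \<beta>) \<le> r1 n}"
      "1 - e \<le> measure (P n \<beta>) {Z \<in> space (P n \<beta>). l1norm (vhat n Z - v \<beta>) \<le> r2 n}"
      "1 - e \<le> measure (P n \<beta>) {Z \<in> space (P n \<beta>). linfnorm (t n Z \<beta>) \<le> r3 n}"
      "1 - e \<le> measure (P n \<beta>) {Z \<in> space (P n \<beta>). \<bar>v \<beta> \<bullet> t n Z \<beta>\<bar> \<le> r4 n}"
      "1 - e \<le> measure (P n \<beta>) {Z \<in> space (P n \<beta>). \<forall>\<nu>\<in>{0..1}. linfnorm (vhat n Z v* T n Z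
          (\<nu> *\<^sub>R setc k (betahat n Z) (\<beta> $ k) + (1 - \<nu>) *\<^sub>R \<beta>) - axis k 1) \<le> r5 n}"
      "1 - e \<le> measure (P n \<beta>) {Z \<in> space (P n \<beta>). \<bar>sigma2hat n Z - sigma2 \<beta>\<bar> \<le> r6 n}"
  shows "good_event K n \<beta> \<in> sets (P n \<beta>) \<and> 1 - 6 * e - B / K \<le> measure (P n \<beta>) (good_event K n \<beta>)"
proof -
  interpret prob_space "P n \<beta>" by (rule prob_space_P[OF \<beta>])
  have [measurable]: "\<psi> n \<in> borel_measurable (P n \<beta>)"
    using \<psi>_integrable[OF \<beta>] by (rule borel_measurable_integrable)
  define E1 where "E1 = {Z \<in> space (P n \<beta>). l1norm (betahat n Z - \<beta>) \<le> r1 n}"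
  define E2 where "E2 = {Z \<in> space (P n \<beta>). l1norm (vhat n Z - v \<beta>) \<le> r2 n}"
  define E3 where "E3 = {Z \<in> space (P n \<beta>). linfnorm (t n Z \<beta>) \<le> r3 n}"
  define E4 where "E4 = {Z \<in> space (P n \<beta>). \<bar>v \<beta> \<bullet> t n Z \<beta>\<bar> \<le> r4 n}"
  define E5 where "E5 = {Z \<in> space (P n \<beta>). \<forall>\<nu>\<in>{0..1}. linfnorm (vhat n Z v* T n Z
         (\<nu> *\<^sub>R setc k (betahat n Z) (\<beta> $ k) + (1 - \<nu>) *\<^sub>R \<beta>) - axis k 1) \<le> r5 n}"
  define E6 where "E6 = {Z \<in> space (P n \<beta>). \<bar>sigma2hat n Z - sigma2 \<beta>\<bar> \<le> r6 n}"
  define E7 where "E7 = {Z \<in> space (P n \<beta>). \<psi> n Z \<le> K}"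
  have likely: "1 - e \<le> prob E1" "1 - e \<le> prob E2" "1 - e \<le> prob E3" "1 - e \<le> prob E4"
    "1 - e \<le> prob E5" "1 - e \<le> prob E6" "1 - B / K \<le> prob E7"
    using assms \<psi>_le_likely[OF \<beta> \<open>0 < K\<close>, of n]
    unfolding E1_def E2_def E3_def E4_def E5_def E6_def E7_def by auto
  \<comment> \<open>measurability of the estimators is not assumed; an event of positive probability is measurable
      because \<open>measure\<close> vanishes outside \<open>sets\<close>\<close>
  have "E1 \<in> events" "E2 \<in> events" "E3 \<in> events" "E4 \<in> events" "E5 \<in> events" "E6 \<in> events"
    using likely \<open>e < 1\<close> measure_notin_sets by fastforce+
  moreover have "E7 \<in> events" unfolding E7_def by measurable
  moreover have "good_event K n \<beta> = E1 \<inter> (E2 \<inter> (E3 \<inter> (E4 \<inter> (E5 \<inter> (E6 \<inter> E7)))))"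
    unfolding good_event_def E1_def E2_def E3_def E4_def E5_def E6_def E7_def by auto
  ultimately show ?thesis
    using likely prob_Int_ge[of E1 "E2 \<inter> (E3 \<inter> (E4 \<inter> (E5 \<inter> (E6 \<inter> E7))))"]
      prob_Int_ge[of E2 "E3 \<inter> (E4 \<inter> (E5 \<inter> (E6 \<inter> E7)))"] prob_Int_ge[of E3 "E4 \<inter> (E5 \<inter> (E6 \<inter> E7))"]
      prob_Int_ge[of E4 "E5 \<inter> (E6 \<inter> E7)"] prob_Int_ge[of E5 "E6 \<inter> E7"] prob_Int_ge[of E6 E7]
    by simp
qed

lemma good_event_likely:
  assumes "0 < e" "e \<le> 1"
  obtains K where "0 < K" "\<forall>\<^sub>F n in sequentially. \<forall>\<beta>\<in>\<Omega>.
      good_event K n \<beta> \<in> sets (P n \<beta>) \<and> 1 - e \<le> measure (P n \<beta>) (good_event K n \<beta>)"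
proof
  obtain \<beta>\<^sub>0 where "\<beta>\<^sub>0 \<in> \<Omega>" using \<Omega>_nonempty by blast
  have "0 \<le> integral\<^sup>L (P 0 \<beta>\<^sub>0) (\<psi> 0)" using \<psi>_nonneg by (intro integral_nonneg_AE) auto
  then have "0 \<le> B" using \<psi>_integral_le[OF \<open>\<beta>\<^sub>0 \<in> \<Omega>\<close>, of 0] by linarith
  define K where "K = 2 * B / e + 1"
  have "0 \<le> 2 * B / e" using \<open>0 \<le> B\<close> assms by simp
  then show "0 < K" by (simp add: K_def)
  have "B / K \<le> e / 2"
    using \<open>0 \<le> B\<close> assms \<open>0 < K\<close> by (simp add: K_def field_simps)
  have "e / 12 < 1" "1 - e / 12 < 1" using assms by simp_all
  note ev = eventually_forall_ge_of_INF_tendsto[OF _ measure_nonneg \<open>1 - e / 12 < 1\<close>]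
  show "\<forall>\<^sub>F n in sequentially. \<forall>\<beta>\<in>\<Omega>.
      good_event K n \<beta> \<in> sets (P n \<beta>) \<and> 1 - e \<le> measure (P n \<beta>) (good_event K n \<beta>)"
    using ev[OF betahat_rate] ev[OF vhat_rate] ev[OF score_rate] ev[OF projected_score_rate]
      ev[OF hessian_rate] ev[OF sigma2hat_rate]
  proof eventually_elim
    case (elim n)
    show ?case
    proof
      fix \<beta> assume "\<beta> \<in> \<Omega>"
      with elim good_event_prob_ge[OF _ \<open>0 < K\<close> \<open>e / 12 < 1\<close>, of \<beta> n] \<open>B / K \<le> e / 2\<close>
      show "good_event K n \<beta> \<in> sets (P n \<beta>) \<and> 1 - e \<le> measure (P n \<beta>) (good_event K n \<beta>)"
        by auto
    qed
  qed
qed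

definition score_statistic :: "nat \<Rightarrow> real ^ 'd \<Rightarrow> 'z \<Rightarrow> real" where
  "score_statistic n \<beta> Z = sqrt (real n) / sqrt (sigma2 \<beta>) * (v \<beta> \<bullet> t n Z \<beta>)"

definition studentized_estimator :: "nat \<Rightarrow> real ^ 'd \<Rightarrow> 'z \<Rightarrow> real" where
  "studentized_estimator n \<beta> Z = sqrt (real n) / sqrt (sigma2hat n Z) * (thetatilde n Z - \<beta> $ k)"

lemma score_statistic_measurable: "\<beta> \<in> \<Omega> \<Longrightarrow> score_statistic n \<beta> \<in> borel_measurable (P n \<beta>)"
  using t_measurable unfolding score_statistic_def[abs_def] by measurable

lemma studentized_estimator_measurable:
  "\<beta> \<in> \<Omega> \<Longrightarrow> studentized_estimator n \<beta> \<in> borel_measurable (P n \<beta>)"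
  using thetatilde_measurable sigma2hat_measurable unfolding studentized_estimator_def[abs_def]
  by measurable

lemma studentized_estimator_affine_on_good_event:
  assumes \<beta>: "\<beta> \<in> \<Omega>" and Z: "Z \<in> good_event K n \<beta>"
    and "0 < \<epsilon>" "r1 n + \<epsilon> < \<gamma>" "r2 n < \<gamma>" "r5 n + K * \<epsilon> \<le> \<tau>" "\<tau> \<le> 1/2"
      "r4 n + r1 n * r5 n + r2 n * r3 n < \<epsilon> / 2" "r6 n \<le> C * \<tau>"
      "sqrt n * (r1 n * r5 n + r2 n * r3 n) \<le> \<rho> * sqrt C"
  shows "\<exists>c R. 0 < c \<and> \<bar>c - 1\<bar> \<le> 3 * \<tau> \<and> \<bar>R\<bar> \<le> \<rho> \<and>
           studentized_estimator n \<beta> Z = - (score_statistic n \<beta> Z + R) / c"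
proof -
  define g where "g = vhat n Z \<bullet> t n Z (setc k (betahat n Z) (\<beta> $ k))"
  define w where "w = v \<beta> \<bullet> t n Z \<beta>"
  have e1: "l1norm (betahat n Z - \<beta>) \<le> r1 n" and e2: "l1norm (vhat n Z - v \<beta>) \<le> r2 n"
    and e3: "linfnorm (t n Z \<beta>) \<le> r3 n" and e4: "\<bar>v \<beta> \<bullet> t n Z \<beta>\<bar> \<le> r4 n"
    and e5: "\<forall>\<nu>\<in>{0..1}. linfnorm (vhat n Z v* T n Z
               (\<nu> *\<^sub>R setc k (betahat n Z) (\<beta> $ k) + (1 - \<nu>) *\<^sub>R \<beta>) - axis k 1) \<le> r5 n"
    and e6: "\<bar>sigma2hat n Z - sigma2 \<beta>\<bar> \<le> r6 n" and e7: "\<psi> n Z \<le> K"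
    using Z unfolding good_event_def by auto
  have "l1norm (vhat n Z - v \<beta>) < \<gamma>" using e2 assms by linarith
  then have bound: "\<bar>deriv (\<lambda>c. \<Sum>i\<in>UNIV. vhat n Z $ i * T n Z (setc k b c) $ i $ k) (b $ k)\<bar> \<le> K"
    if "l1norm (b - \<beta>) < \<gamma>" for b
    using slope_derivative_le_\<psi>[OF \<beta> _ that, where n = n and Z = Z] e7 by fastforce
  obtain D where D: "\<bar>D - 1\<bar> \<le> \<tau>" "thetatilde n Z - \<beta> $ k = - g / D"
    using debiased_root_expansion[OF t_has_derivative T_differentiable thetatilde_root e1 e2 e3 e4 e5 bound]
      assms unfolding g_def by blast
  have "\<bar>sigma2hat n Z - sigma2 \<beta>\<bar> \<le> C * \<tau>" using e6 assms by linarith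
  then obtain c where c: "0 < c" "\<bar>c - 1\<bar> \<le> 3 * \<tau>" and
    eq: "sqrt n / sqrt (sigma2hat n Z) * (- g / D) =
         - (sqrt n / sqrt (sigma2 \<beta>) * w + sqrt n / sqrt (sigma2 \<beta>) * (g - w)) / c"
    using studentized_ratio_affine[OF sigma2_lower(1) sigma2_lower(2)[OF \<beta>] _ _ D(1)] assms by blast
  have "\<bar>g - w\<bar> \<le> r1 n * r5 n + r2 n * r3 n"
    unfolding g_def w_def by (rule plugin_score_error[OF t_has_derivative e1 e2 e3 e5])
  moreover have "0 < C" "C \<le> sigma2 \<beta>" using sigma2_lower \<beta> by auto
  ultimately have "\<bar>sqrt n / sqrt (sigma2 \<beta>) * (g - w)\<bar> \<le> sqrt n * (r1 n * r5 n + r2 n * r3 n) / sqrt C"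
    by (auto simp: abs_mult intro!: frac_le mult_left_mono)
  also have "\<dots> \<le> \<rho>" using assms \<open>0 < C\<close> by (simp add: divide_le_eq)
  finally have "\<bar>sqrt n / sqrt (sigma2 \<beta>) * (g - w)\<bar> \<le> \<rho>" .
  moreover have "studentized_estimator n \<beta> Z
      = - (score_statistic n \<beta> Z + sqrt n / sqrt (sigma2 \<beta>) * (g - w)) / c"
    using eq D(2) unfolding studentized_estimator_def score_statistic_def w_def by simp
  ultimately show ?thesis using c by blast
qed

lemma studentized_estimator_affine_in_score:
  assumes "0 < \<tau>" "\<tau> \<le> 1/2" "0 < K" "0 < \<rho>"
  shows "\<forall>\<^sub>F n in sequentially. \<forall>\<beta>\<in>\<Omega>. \<forall>Z\<in>good_event K n \<beta>. \<exists>c R.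
           0 < c \<and> \<bar>c - 1\<bar> \<le> 3 * \<tau> \<and> \<bar>R\<bar> \<le> \<rho> \<and>
           studentized_estimator n \<beta> Z = - (score_statistic n \<beta> Z + R) / c"
proof -
  define \<epsilon> where "\<epsilon> = min (\<gamma> / 2) (\<tau> / (2 * K))"
  have \<epsilon>: "0 < \<epsilon>" "\<epsilon> \<le> \<gamma> / 2" "K * \<epsilon> \<le> \<tau> / 2"
    using assms \<gamma>_pos by (auto simp: \<epsilon>_def min_def field_simps)
  have "(\<lambda>n. r4 n + r1 n * r5 n + r2 n * r3 n) \<longlonglongrightarrow> 0 + 0 * 0 + 0 * 0"
    by (intro tendsto_intros r1 r2 r3 r4 r5)
  then have "\<forall>\<^sub>F n in sequentially. r4 n + r1 n * r5 n + r2 n * r3 n < \<epsilon> / 2"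
    using \<epsilon> by (intro order_tendstoD) auto
  moreover have "\<forall>\<^sub>F n in sequentially. r1 n < \<gamma> / 2" using r1 \<gamma>_pos by (intro order_tendstoD) auto
  moreover have "\<forall>\<^sub>F n in sequentially. r2 n < \<gamma>" using r2 \<gamma>_pos by (intro order_tendstoD) auto
  moreover have "\<forall>\<^sub>F n in sequentially. r5 n < \<tau> / 2" using r5 assms by (intro order_tendstoD) auto
  moreover have "\<forall>\<^sub>F n in sequentially. r6 n < C * \<tau>"
    using r6 sigma2_lower assms by (intro order_tendstoD) auto
  moreover have "\<forall>\<^sub>F n in sequentially. sqrt (real n) * (r1 n * r5 n + r2 n * r3 n) < \<rho> * sqrt C"
    using root_n_rate sigma2_lower assms by (intro order_tendstoD) auto
  ultimately show ?thesis
  proof eventually_elim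
    case (elim n)
    then show ?case
      using \<epsilon> assms by (intro ballI studentized_estimator_affine_on_good_event) auto
  qed
qed

lemma score_statistic_cdf:
  assumes "0 < a"
  shows "\<forall>\<^sub>F n in sequentially. \<forall>\<beta>\<in>\<Omega>. \<forall>x.
           \<bar>measure (P n \<beta>) {Z \<in> space (P n \<beta>). score_statistic n \<beta> Z \<le> x} - Phi x\<bar> \<le> a"
  unfolding score_statistic_def
proof (rule eventually_forall_le_of_SUP_tendsto[OF score_clt _ assms])
  fix n \<beta> x assume "\<beta> \<in> \<Omega>"
  then interpret prob_space "P n \<beta>" by (rule prob_space_P)
  have "\<bar>prob A - Phi x\<bar> \<le> 2" for A
  proof -
    have "0 \<le> prob A" "prob A \<le> 1" by (simp_all add: prob_le_1)
    with Phi_nonneg[of x] Phi_le_1[of x] show ?thesis by linarith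
  qed
  then show "0 \<le> \<bar>prob {Z \<in> space (P n \<beta>). sqrt (real n) / sqrt (sigma2 \<beta>) * (v \<beta> \<bullet> t n Z \<beta>) \<le> x} - Phi x\<bar>
      \<and> \<bar>prob {Z \<in> space (P n \<beta>). sqrt (real n) / sqrt (sigma2 \<beta>) * (v \<beta> \<bullet> t n Z \<beta>) \<le> x} - Phi x\<bar> \<le> 2"
    using abs_ge_zero by blast
qed

theorem studentized_estimator_asymptotically_normal:
  "(\<lambda>n. SUP \<beta>\<in>\<Omega>. SUP x. \<bar>measure (P n \<beta>)
      {Z \<in> space (P n \<beta>). studentized_estimator n \<beta> Z \<le> x} - Phi x\<bar>) \<longlonglongrightarrow> 0"
proof (rule SUP_SUP_tendsto_zeroI[OF \<Omega>_nonempty abs_ge_zero])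
  fix \<delta> :: real assume "0 < \<delta>"
  obtain \<eta> where \<eta>: "0 < \<eta>" "\<eta> \<le> 1/2"
    and Phi_near: "\<And>x y. \<bar>y - x\<bar> \<le> \<eta> * \<bar>x\<bar> \<Longrightarrow> \<bar>Phi y - Phi x\<bar> \<le> \<delta> / 4"
    using Phi_relative_perturbation[of "\<delta> / 4"] \<open>0 < \<delta>\<close> by auto
  obtain K where "0 < K" and good: "\<forall>\<^sub>F n in sequentially. \<forall>\<beta>\<in>\<Omega>.
      good_event K n \<beta> \<in> sets (P n \<beta>) \<and> 1 - min 1 (\<delta> / 4) \<le> measure (P n \<beta>) (good_event K n \<beta>)"
    using good_event_likely[of "min 1 (\<delta> / 4)"] \<open>0 < \<delta>\<close> by auto
  have affine: "\<forall>\<^sub>F n in sequentially. \<forall>\<beta>\<in>\<Omega>. \<forall>Z\<in>good_event K n \<beta>. \<exists>c R.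
      0 < c \<and> \<bar>c - 1\<bar> \<le> 3 * (\<eta> / 3) \<and> \<bar>R\<bar> \<le> \<delta> / 8 \<and>
      studentized_estimator n \<beta> Z = - (score_statistic n \<beta> Z + R) / c"
    using \<eta> \<open>0 < K\<close> \<open>0 < \<delta>\<close> by (intro studentized_estimator_affine_in_score) auto
  have "0 < \<delta> / 4" using \<open>0 < \<delta>\<close> by simp
  from good affine score_statistic_cdf[OF this]
  show "\<forall>\<^sub>F n in sequentially. \<forall>\<beta>\<in>\<Omega>. \<forall>x.
      \<bar>measure (P n \<beta>) {Z \<in> space (P n \<beta>). studentized_estimator n \<beta> Z \<le> x} - Phi x\<bar> \<le> \<delta>"
  proof eventually_elim
    case (elim n)
    show ?case
    proof (intro ballI allI)
      fix \<beta> x assume \<beta>: "\<beta> \<in> \<Omega>"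
      interpret prob_space "P n \<beta>" by (rule prob_space_P[OF \<beta>])
      have "\<bar>prob {Z \<in> space (P n \<beta>). score_statistic n \<beta> Z \<le> y} - Phi y\<bar> \<le> \<delta> / 4" for y
        using elim(3) \<beta> by blast
      moreover have "good_event K n \<beta> \<in> events" "1 - min 1 (\<delta> / 4) \<le> prob (good_event K n \<beta>)"
        using elim(1) \<beta> by auto
      moreover have "\<exists>c R. 0 < c \<and> \<bar>c - 1\<bar> \<le> \<eta> \<and> \<bar>R\<bar> \<le> \<delta> / 8 \<and>
          studentized_estimator n \<beta> Z = - (score_statistic n \<beta> Z + R) / c"
        if "Z \<in> good_event K n \<beta>" for Z
        using elim(2) \<beta> that by auto
      ultimately have "\<bar>prob {Z \<in> space (P n \<beta>). studentized_estimator n \<beta> Z \<le> x} - Phi x\<bar>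
          \<le> \<delta> / 4 + 2 * (\<delta> / 8) + \<delta> / 4 + min 1 (\<delta> / 4)"
        using Phi_near \<eta> \<open>0 < \<delta>\<close> score_statistic_measurable[OF \<beta>] studentized_estimator_measurable[OF \<beta>]
        by (intro cdf_affine_perturbation) auto
      then show "\<bar>prob {Z \<in> space (P n \<beta>). studentized_estimator n \<beta> Z \<le> x} - Phi x\<bar> \<le> \<delta>"
        by linarith
    qed
  qed
qed

end

text \<open>Only the rates at the true parameter enter the proof.\<close>

theorem theorem3:
  fixes P :: "nat \<Rightarrow> real ^ 'd \<Rightarrow> 'z measure"
    and s :: nat and k :: 'd
    and t :: "nat \<Rightarrow> 'z \<Rightarrow> real ^ 'd \<Rightarrow> real ^ 'd"
    and T :: "nat \<Rightarrow> 'z \<Rightarrow> real ^ 'd \<Rightarrow> real ^ 'd ^ 'd"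
    and Et :: "real ^ 'd \<Rightarrow> real ^ 'd \<Rightarrow> real ^ 'd"
    and ET :: "real ^ 'd \<Rightarrow> real ^ 'd \<Rightarrow> real ^ 'd ^ 'd"
    and Sig :: "real ^ 'd \<Rightarrow> real ^ 'd ^ 'd"
    and v :: "real ^ 'd \<Rightarrow> real ^ 'd"
    and sigma2 :: "real ^ 'd \<Rightarrow> real"
    and lam lam' :: "nat \<Rightarrow> real"
    and betahat vhat :: "nat \<Rightarrow> 'z \<Rightarrow> real ^ 'd"
    and thetatilde sigma2hat :: "nat \<Rightarrow> 'z \<Rightarrow> real"
    and r1 r2 r3 r4 r5 r6 :: "nat \<Rightarrow> real"
    and \<Omega> :: "(real ^ 'd) set"
  defines "\<Omega> \<equiv> {\<beta>. l0norm \<beta> \<le> s}"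
  assumes prob: "\<And>n \<beta>. \<beta> \<in> \<Omega> \<Longrightarrow> prob_space (P n \<beta>)"
    and t_meas: "\<And>n \<beta> b. \<beta> \<in> \<Omega> \<Longrightarrow> (\<lambda>Z. t n Z b) \<in> borel_measurable (P n \<beta>)"
    and T_meas: "\<And>n \<beta> b. \<beta> \<in> \<Omega> \<Longrightarrow> (\<lambda>Z. T n Z b) \<in> borel_measurable (P n \<beta>)"
    and t_deriv: "\<And>n Z b. (t n Z has_derivative (\<lambda>h. T n Z b *v h)) (at b)"
    and T_diff: "\<And>n Z b. T n Z differentiable (at b)"
    and Et_lim: "\<And>\<beta> b. \<beta> \<in> \<Omega> \<Longrightarrow> (\<forall>n. integrable (P n \<beta>) (\<lambda>Z. t n Z b)) \<and>
                   (\<lambda>n. integral\<^sup>L (P n \<beta>) (\<lambda>Z. t n Z b)) \<longlonglongrightarrow> Et \<beta> b"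
    and ET_lim: "\<And>\<beta> b. \<beta> \<in> \<Omega> \<Longrightarrow> (\<forall>n. integrable (P n \<beta>) (\<lambda>Z. T n Z b)) \<and>
                   (\<lambda>n. integral\<^sup>L (P n \<beta>) (\<lambda>Z. T n Z b)) \<longlonglongrightarrow> ET \<beta> b"
    and Et_root: "\<And>\<beta> b. \<beta> \<in> \<Omega> \<Longrightarrow> Et \<beta> b = 0 \<longleftrightarrow> b = \<beta>"
    and ET_inv: "\<And>\<beta>. \<beta> \<in> \<Omega> \<Longrightarrow> invertible (ET \<beta> \<beta>)"
    and v_def: "\<And>\<beta>. v \<beta> = row k (matrix_inv (ET \<beta> \<beta>))"
    and Sig_lim: "\<And>\<beta>. \<beta> \<in> \<Omega> \<Longrightarrow>
                   (\<lambda>n. real n *\<^sub>R covmat (P n \<beta>) (\<lambda>Z. t n Z \<beta>)) \<longlonglongrightarrow> Sig \<beta>"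
    and sigma2_def: "\<And>\<beta>. sigma2 \<beta> = v \<beta> \<bullet> (Sig \<beta> *v v \<beta>)"
    and betahat_def: "\<And>n Z. (\<exists>b. linfnorm (t n Z b) \<le> lam n) \<Longrightarrow>
                   linfnorm (t n Z (betahat n Z)) \<le> lam n \<and>
                   (\<forall>b. linfnorm (t n Z b) \<le> lam n \<longrightarrow> l1norm (betahat n Z) \<le> l1norm b)"
    and vhat_def: "\<And>n Z. (\<exists>u. linfnorm (u v* T n Z (betahat n Z) - axis k 1) \<le> lam' n) \<Longrightarrow>
                   linfnorm (vhat n Z v* T n Z (betahat n Z) - axis k 1) \<le> lam' n \<and>
                   (\<forall>u. linfnorm (u v* T n Z (betahat n Z) - axis k 1) \<le> lam' n \<longrightarrow>
                        l1norm (vhat n Z) \<le> l1norm u)"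
    and thetatilde_root: "\<And>n Z.
          (continuous_on UNIV (\<lambda>c. vhat n Z \<bullet> t n Z (setc k (betahat n Z) c)) \<and>
           {c. vhat n Z \<bullet> t n Z (setc k (betahat n Z) c) = 0} = {thetatilde n Z})
        \<or> (mono (\<lambda>c. vhat n Z \<bullet> t n Z (setc k (betahat n Z) c)) \<and>
           vhat n Z \<bullet> t n Z (setc k (betahat n Z) (thetatilde n Z)) = 0)"
    and thetatilde_meas: "\<And>n \<beta>. \<beta> \<in> \<Omega> \<Longrightarrow> thetatilde n \<in> borel_measurable (P n \<beta>)"
    and sigma2hat_meas: "\<And>n \<beta>. \<beta> \<in> \<Omega> \<Longrightarrow> sigma2hat n \<in> borel_measurable (P n \<beta>)"
    (* (UA1) *)
    and UA1a: "(\<lambda>n. INF \<beta>\<in>\<Omega>. prob_space.prob (P n \<beta>)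
                 {Z \<in> space (P n \<beta>). l1norm (betahat n Z - \<beta>) \<le> r1 n}) \<longlonglongrightarrow> 1"
    and UA1b: "(\<lambda>n. INF \<beta>\<in>\<Omega>. prob_space.prob (P n \<beta>)
                 {Z \<in> space (P n \<beta>). l1norm (vhat n Z - v \<beta>) \<le> r2 n}) \<longlonglongrightarrow> 1"
    and r1: "r1 \<longlonglongrightarrow> 0" and r2: "r2 \<longlonglongrightarrow> 0"
    (* (UA2) *)
    and UA2: "\<exists>\<eta>>0.
       (\<lambda>n. INF \<beta>\<in>\<Omega>. INF c\<in>{\<beta> $ k - \<eta> <..< \<beta> $ k + \<eta>}. prob_space.prob (P n \<beta>)
          {Z \<in> space (P n \<beta>). linfnorm (t n Z (setc k \<beta> c) - Et \<beta> (setc k \<beta> c)) \<le> r3 n})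
          \<longlonglongrightarrow> 1
     \<and> (\<lambda>n. INF \<beta>\<in>\<Omega>. INF c\<in>{\<beta> $ k - \<eta> <..< \<beta> $ k + \<eta>}. prob_space.prob (P n \<beta>)
          {Z \<in> space (P n \<beta>). \<bar>v \<beta> \<bullet> t n Z (setc k \<beta> c) - v \<beta> \<bullet> Et \<beta> (setc k \<beta> c)\<bar> \<le> r4 n})
          \<longlonglongrightarrow> 1
     \<and> (\<lambda>n. INF \<beta>\<in>\<Omega>. INF c\<in>{\<beta> $ k - \<eta> <..< \<beta> $ k + \<eta>}. prob_space.prob (P n \<beta>)
          {Z \<in> space (P n \<beta>). \<forall>\<nu>\<in>{0..1::real}.
             linfnorm (vhat n Z v* T n Z (\<nu> *\<^sub>R setc k (betahat n Z) c + (1 - \<nu>) *\<^sub>R setc k \<beta> c)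
                       - v \<beta> v* ET \<beta> (setc k \<beta> c)) \<le> r5 n})
          \<longlonglongrightarrow> 1
     \<and> (\<exists>M. \<forall>\<beta>\<in>\<Omega>. \<forall>c\<in>{\<beta> $ k - \<eta> <..< \<beta> $ k + \<eta>}. linfnorm (Et \<beta> (setc k \<beta> c)) \<le> M)
     \<and> (\<exists>M. \<forall>\<beta>\<in>\<Omega>. \<forall>c\<in>{\<beta> $ k - \<eta> <..< \<beta> $ k + \<eta>}. \<forall>j. j \<noteq> k \<longrightarrow>
            \<bar>(v \<beta> v* ET \<beta> (setc k \<beta> c)) $ j\<bar> \<le> M)"
    and r3: "r3 \<longlonglongrightarrow> 0" and r4: "r4 \<longlonglongrightarrow> 0" and r5: "r5 \<longlonglongrightarrow> 0"
    (* (UA3) *)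
    and UA3a: "\<exists>C>0. \<forall>\<beta>\<in>\<Omega>. sigma2 \<beta> \<ge> C"
    and UA3b: "(\<lambda>n. SUP \<beta>\<in>\<Omega>. SUP x. \<bar>prob_space.prob (P n \<beta>)
                 {Z \<in> space (P n \<beta>). sqrt (real n) / sqrt (sigma2 \<beta>) * (v \<beta> \<bullet> t n Z \<beta>) \<le> x}
                 - Phi x\<bar>) \<longlonglongrightarrow> 0"
    (* (UA4) *)
    and UA4: "\<exists>\<gamma>>0. \<exists>\<psi> :: nat \<Rightarrow> 'z \<Rightarrow> real.
        (\<forall>n \<beta> Z vc bc. \<beta> \<in> \<Omega> \<longrightarrow> l1norm (vc - v \<beta>) < \<gamma> \<longrightarrow> l1norm (bc - \<beta>) < \<gamma> \<longrightarrow>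
            \<bar>deriv (\<lambda>c. \<Sum>i\<in>UNIV. vc $ i * T n Z (setc k bc c) $ i $ k) (bc $ k)\<bar> \<le> \<psi> n Z)
      \<and> (\<forall>n \<beta>. \<beta> \<in> \<Omega> \<longrightarrow> integrable (P n \<beta>) (\<psi> n))
      \<and> (\<exists>B. \<forall>n. \<forall>\<beta>\<in>\<Omega>. integral\<^sup>L (P n \<beta>) (\<psi> n) \<le> B)"
    (* (UA5) *)
    and UA5: "(\<lambda>n. INF \<beta>\<in>\<Omega>. prob_space.prob (P n \<beta>)
                 {Z \<in> space (P n \<beta>). \<bar>sigma2hat n Z - sigma2 \<beta>\<bar> \<le> r6 n}) \<longlonglongrightarrow> 1"
    and r6: "r6 \<longlonglongrightarrow> 0"
    and sign_change: "\<And>\<beta> \<epsilon>. \<beta> \<in> \<Omega> \<Longrightarrow> \<epsilon> > 0 \<Longrightarrow>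
        (v \<beta> \<bullet> Et \<beta> (setc k \<beta> (\<beta> $ k - \<epsilon>))) * (v \<beta> \<bullet> Et \<beta> (setc k \<beta> (\<beta> $ k + \<epsilon>))) < 0"
    and rates: "(\<lambda>n. sqrt (real n) * (r1 n * r5 n + r2 n * r3 n)) \<longlonglongrightarrow> 0"
  shows "(\<lambda>n. SUP \<beta>\<in>\<Omega>. SUP x. \<bar>prob_space.prob (P n \<beta>)
            {Z \<in> space (P n \<beta>). sqrt (real n) / sqrt (sigma2hat n Z) * (thetatilde n Z - \<beta> $ k) \<le> x}
            - Phi x\<bar>) \<longlonglongrightarrow> 0"
proof -
  have "\<Omega> \<noteq> {}" by (auto simp: \<Omega>_def l0norm_def intro!: exI[of _ 0])
  obtain \<gamma> \<psi> B where \<gamma>: "0 < \<gamma>"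
    and \<psi>: "\<And>n \<beta> Z u b. \<beta> \<in> \<Omega> \<Longrightarrow> l1norm (u - v \<beta>) < \<gamma> \<Longrightarrow> l1norm (b - \<beta>) < \<gamma> \<Longrightarrow>
          \<bar>deriv (\<lambda>c. \<Sum>i\<in>UNIV. u $ i * T n Z (setc k b c) $ i $ k) (b $ k)\<bar> \<le> \<psi> n Z"
      "\<And>n \<beta>. \<beta> \<in> \<Omega> \<Longrightarrow> integrable (P n \<beta>) (\<psi> n)"
      "\<And>n \<beta>. \<beta> \<in> \<Omega> \<Longrightarrow> integral\<^sup>L (P n \<beta>) (\<psi> n) \<le> B"
    using UA4 by blast
  obtain C where C: "0 < C" "\<And>\<beta>. \<beta> \<in> \<Omega> \<Longrightarrow> C \<le> sigma2 \<beta>" using UA3a by blast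
  interpret debiased_inference P \<Omega> k t T Et ET v sigma2 betahat vhat thetatilde sigma2hat
      r1 r2 r3 r4 r5 r6 \<psi> \<gamma> B C
    by (rule debiased_inference.intro)
       (rule prob t_meas thetatilde_meas sigma2hat_meas t_deriv T_diff thetatilde_root UA1a UA1b
         Et_root ET_inv v_def UA5 r1 r2 r3 r4 r5 r6 rates C UA3b \<gamma> \<psi> \<open>\<Omega> \<noteq> {}\<close>
         | use UA2 in blast | assumption)+
  show ?thesis
    using studentized_estimator_asymptotically_normal by (simp add: studentized_estimator_def)
qed

end
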